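(* Let $G=G_1\,\Box\,\cdots\,\Box\,G_D$ be a cartesian product of cycle digraphs $C_{n}$ ($n\ge3$) and simple directed paths $P_n$ ($n\ge2$). Let $c_{\mathrm{even}}$ be the number of factors that are cycle digraphs with an even number of vertices. Then $$\frac{\dim\ker\mathcal D(G)}{r}=\begin{cases}2^{c_{\mathrm{even}}}&\text{if no factor is a simple directed path with an even number of vertices},\\ 0&\text{otherwise.}\end{cases}$$ In particular, if no factor is a path with an even number of vertices, then $\dim\ker\mathcal D(G)\ge r$.
   Context: The cycle digraph $C_n$ has vertex set $\{1,\dots,n\}$ and edges $i\to i+1$ for $1\le i\le n-1$ together with $n\to1$. The simple directed path $P_n$ has vertex set $\{1,\dots,n\}$ and edges $i\to i+1$ for $1\le i\le n-1$. For a directed graph without multiple edges, the anti-symmetrized adjacency matrix $A_{\mathrm{as}}$ is the $|V|\times|V|$ matrix with: - $(A_{\mathrm{as}})_{ij}=1$ if an edge leaves $i$ and enters $j$; - $(A_{\mathrm{as}})_{ij}=-1$ if an edge leaves $j$ and enters $i$; - $(A_{\mathrm{as}})_{ij}=0$ otherwise. Let $\gamma_1,\dots,\gamma_D$ be complex $r\times r$ matrices satisfying $\gamma_\mu\gamma_\nu+\gamma_\nu\gamma_\mu=2\delta_{\mu\nu}\mathbf 1_r$. For $G_\mu$ with $n_\mu$ vertices, define $$\mathcal D(G)=\sum_{\mu=1}^D\Big(\mathbf 1_{n_D}\otimes\cdots\otimes\mathbf 1_{n_{\mu+1}}\otimes A_{\mathrm{as}}(G_\mu)\otimes\mathbf 1_{n_{\mu-1}}\otimes\cdots\otimes\mathbf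 1_{n_1}\Big)\otimes\gamma_\mu,$$ where $\otimes$ is the Kronecker product and $\mathbf 1_k$ is the $k\times k$ identity. *)

theory Defs
  imports "Jordan_Normal_Form.Matrix_Kernel" Complex_Main
begin

definition kron :: "'a::times mat \<Rightarrow> 'a mat \<Rightarrow> 'a mat" where
  "kron A B = mat (dim_row A * dim_row B) (dim_col A * dim_col B)
     (\<lambda>(i, j). A $$ (i div dim_row B, j div dim_col B) * B $$ (i mod dim_row B, j mod dim_col B))"

(* The factor digraphs: cycle digraph C_n and simple directed path P_n.
   Vertices 1..n of the paper are represented as 0..n-1 (vertex k+1 is index k). *)
datatype factor = Cycle nat | Path nat

fun nverts :: "factor \<Rightarrow> nat" where
  "nverts (Cycle n) = n"
| "nverts (Path n) = n"

fun edge :: "factor \<Rightarrow> nat \<Rightarrow> nat \<Rightarrow> bool" where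
  "edge (Cycle n) i j = (i < n \<and> j < n \<and> (j = i + 1 \<or> (i = n - 1 \<and> j = 0)))"
| "edge (Path n) i j = (i < n \<and> j < n \<and> j = i + 1)"

fun valid_factor :: "factor \<Rightarrow> bool" where
  "valid_factor (Cycle n) = (n \<ge> 3)"
| "valid_factor (Path n) = (n \<ge> 2)"

definition A_as :: "factor \<Rightarrow> complex mat" where
  "A_as G = mat (nverts G) (nverts G)
     (\<lambda>(i, j). if edge G i j then 1 else if edge G j i then -1 else 0)"

(* term mu (0-indexed, mu < D) of D(G): 1_{n_D} (x) ... (x) A_as(G_mu) (x) ... (x) 1_{n_1} (x) gamma_mu,
   where Gs ! k is the factor G_{k+1} and gam k is gamma_{k+1}. *)
definition dirac_term :: "factor list \<Rightarrow> (nat \<Rightarrow> complex mat) \<Rightarrow> nat \<Rightarrow> complex mat" where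
  "dirac_term Gs gam mu =
     kron (foldr kron (rev (map (\<lambda>nu. if nu = mu then A_as (Gs ! nu) else 1\<^sub>m (nverts (Gs ! nu)))
                              [0..<length Gs])) (1\<^sub>m 1))
          (gam mu)"

definition dirac :: "factor list \<Rightarrow> (nat \<Rightarrow> complex mat) \<Rightarrow> nat \<Rightarrow> complex mat" where
  "dirac Gs gam r =
     foldr (+) (map (dirac_term Gs gam) [0..<length Gs])
       (0\<^sub>m ((\<Prod>G\<leftarrow>Gs. nverts G) * r) ((\<Prod>G\<leftarrow>Gs. nverts G) * r))"

definition c_even :: "factor list \<Rightarrow> nat" where
  "c_even Gs = length (filter (\<lambda>G. \<exists>n. G = Cycle n \<and> even n) Gs)"

definition has_even_path :: "factor list \<Rightarrow> bool" where
  "has_even_path Gs = (\<exists>n. Path n \<in> set Gs \<and> even n)"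

end

theory Submission
  imports Defs
begin

(* Write Y_mu = B_mu (x) 1_r, where B_mu is A_as(G_mu) acting on the mu-th tensor factor.
   The B_mu commute, so the Clifford relations cancel the cross terms of D(G)^2, leaving
   D(G)^2 = sum_mu Y_mu^2. Each Y_mu is skew-Hermitian, hence <D(G)^2 v, v> = - sum_mu |Y_mu v|^2
   and ker D(G) is the intersection of the kernels of the Y_mu.
   The kernel of A_as(C_n) is spanned by the constant vector and, for even n, the alternating
   one; A_as(P_n) is injective for even n and has kernel spanned by (1,0,1,...,0,1) for odd n.
   A unipotent change of basis on every factor turns each ker Y_mu into a coordinate subspace,
   so their intersection is spanned by the unit vectors whose vertex coordinates are all kernel
   coordinates; there are r times the product of the dim ker A_as(G_mu) of them. *)

lemma mult_add_less_mult: "(i::nat) < a \<Longrightarrow> j < b \<Longrightarrow> i * b + j < a * b"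
proof -
  assume "i < a" "j < b"
  then have "i * b + j < (i + 1) * b" by simp
  also have "\<dots> \<le> a * b" using \<open>i < a\<close> by (intro mult_right_mono) auto
  finally show ?thesis .
qed

lemma mod_less_of_less_mult: "(i::nat) < a * b \<Longrightarrow> i mod b < b"
  by (cases "b = 0") auto

lemma mod_mult_div_nat: "(i::nat) mod (b * c) div c = i div c mod b"
  by (cases "c = 0") (simp_all add: mult.commute[of b c] mod_mult2_eq)

lemma div_mult_div_nat: "(i::nat) div (b * c) = i div c div b"
  using div_mult2_eq[of i c b] by (simp only: mult.commute[of c b])

lemma mult_add_div_nat: "(z::nat) < m \<Longrightarrow> (x * m + z) div m = x"
  and mult_add_mod_nat: "(z::nat) < m \<Longrightarrow> (x * m + z) mod m = z"
  by simp_all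

lemma mod_Suc_less: "(i::nat) < n \<Longrightarrow> (i + 1) mod n = (if i + 1 < n then i + 1 else 0)"
  by (cases "i + 1 = n") auto

lemma mod_add_pred_less: "(i::nat) < n \<Longrightarrow> (i + n - 1) mod n = (if i = 0 then n - 1 else i - 1)"
proof (cases "i = 0")
  case False
  then have "i + n - 1 = (i - 1) + n" by simp
  then have "(i + n - 1) mod n = (i - 1) mod n" by (metis mod_add_self2)
  then show "i < n \<Longrightarrow> ?thesis" using False by simp
qed simp

lemma sum_lessThan_mult_nat: "(\<Sum>k < a * b. f k) = (\<Sum>i < a. \<Sum>j < (b::nat). f (i * b + j))"
proof -
  have "(\<Sum>j\<in>{i * b..<i * b + b}. f j) = (\<Sum>j<b. f (i * b + j))" for i
    using sum.shift_bounds_nat_ivl[of f 0 "i * b" b] by (simp add: atLeast0LessThan add.commute)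
  then show ?thesis by (simp flip: sum.nat_group)
qed

lemma sum_lessThan_delta: "(\<Sum>j < (n::nat). if j = s then f j else 0) = (if s < n then f s else (0::'a::comm_monoid_add))"
  by (subst sum.delta) auto

lemma double_sum_eq_diagonal:
  fixes x :: "'i \<Rightarrow> 'i \<Rightarrow> 'a::{idom, ring_char_0}"
  assumes "finite S" and anti: "\<And>a b. a \<in> S \<Longrightarrow> b \<in> S \<Longrightarrow> a \<noteq> b \<Longrightarrow> x a b + x b a = 0"
  shows "(\<Sum>a\<in>S. \<Sum>b\<in>S. x a b) = (\<Sum>a\<in>S. x a a)"
proof -
  have "2 * (\<Sum>a\<in>S. \<Sum>b\<in>S. x a b) = (\<Sum>a\<in>S. \<Sum>b\<in>S. x a b + x b a)"
    using sum.swap[of "\<lambda>a b. x b a" S S] by (simp add: sum.distrib)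
  also have "\<dots> = (\<Sum>a\<in>S. \<Sum>b\<in>S. if b = a then 2 * x a a else 0)"
    by (intro sum.cong refl) (use anti in auto)
  also have "\<dots> = 2 * (\<Sum>a\<in>S. x a a)" using \<open>finite S\<close> by (simp add: sum_distrib_left)
  finally show ?thesis by simp
qed

lemma card_div_mod_split:
  fixes M :: nat
  shows "card {p. p < n * M \<and> Q (p div M) \<and> R (p mod M)} = card {d. d < n \<and> Q d} * card {q. q < M \<and> R q}"
proof -
  let ?f = "\<lambda>p. (p div M, p mod M)"
  have image: "?f ` {p. p < n * M \<and> Q (p div M) \<and> R (p mod M)} = {d. d < n \<and> Q d} \<times> {q. q < M \<and> R q}"
  proof (intro equalityI subsetI)
    fix x assume "x \<in> ?f ` {p. p < n * M \<and> Q (p div M) \<and> R (p mod M)}"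
    then show "x \<in> {d. d < n \<and> Q d} \<times> {q. q < M \<and> R q}"
      by (auto simp: less_mult_imp_div_less mod_less_of_less_mult)
  next
    fix x assume "x \<in> {d. d < n \<and> Q d} \<times> {q. q < M \<and> R q}"
    then obtain d q where x: "x = (d, q)" "d < n" "Q d" "q < M" "R q" by auto
    show "x \<in> ?f ` {p. p < n * M \<and> Q (p div M) \<and> R (p mod M)}"
      by (rule image_eqI[of _ _ "d * M + q"]) (use x in \<open>auto simp: mult_add_less_mult\<close>)
  qed
  have inj: "inj ?f"
  proof (rule injI)
    fix x y assume "?f x = ?f y"
    then have "x div M = y div M" "x mod M = y mod M" by simp_all
    then show "x = y" by (metis div_mult_mod_eq)
  qed
  have "card {p. p < n * M \<and> Q (p div M) \<and> R (p mod M)} = card ({d. d < n \<and> Q d} \<times> {q. q < M \<and> R q})"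
    unfolding image[symmetric] by (rule card_image[symmetric], rule inj_on_subset[OF inj subset_UNIV])
  then show ?thesis by (simp add: card_cartesian_product)
qed

lemma mixed_radix_decomp:
  assumes p: "p < a * ((n::nat) * b)"
  shows "p = p div (n * b) * (n * b) + (p div b mod n * b + p mod b)"
    and "p div (n * b) < a" "p div b mod n < n" "p mod b < b"
proof -
  have "0 < a * (n * b)" using p by linarith
  then have pos: "0 < a" "0 < n" "0 < b" by auto
  have "p = p div (n * b) * (n * b) + p mod (n * b)" by (rule div_mult_mod_eq[symmetric])
  moreover have "p mod (n * b) = p mod (n * b) div b * b + p mod (n * b) mod b" by (rule div_mult_mod_eq[symmetric])
  moreover have "p mod (n * b) div b = p div b mod n" by (rule mod_mult_div_nat)
  moreover have "p mod (n * b) mod b = p mod b" by (rule mod_mod_cancel) simp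
  ultimately show "p = p div (n * b) * (n * b) + (p div b mod n * b + p mod b)" by metis
  show "p div (n * b) < a" using p pos by (simp add: less_mult_imp_div_less)
  show "p div b mod n < n" "p mod b < b" using pos by simp_all
qed

lemma mixed_radix_digit:
  assumes "k < n" "y < b"
  shows "(x * ((n::nat) * b) + (k * b + y)) div b mod n = k"
proof -
  have eq: "x * (n * b) + (k * b + y) = (x * n + k) * b + y" by (simp add: algebra_simps)
  have "(x * (n * b) + (k * b + y)) div b = x * n + k" unfolding eq using assms by simp
  then show ?thesis using assms by simp
qed

lemma mixed_radix_digit_mod:
  fixes n :: "nat \<Rightarrow> nat"
  assumes "mu < D"
  shows "p mod (prod n {..<D} * r) div (prod n {..<mu} * r) mod n mu = p div (prod n {..<mu} * r) mod n mu"
proof -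
  have "prod n {..<D} = prod n {..<mu} * prod n {mu..<D}"
    using assms prod.atLeastLessThan_concat[of 0 mu D n] by (simp add: atLeast0LessThan)
  then have M: "prod n {..<D} * r = prod n {mu..<D} * (prod n {..<mu} * r)" by (simp add: mult_ac)
  have "p mod (prod n {..<D} * r) div (prod n {..<mu} * r) = p div (prod n {..<mu} * r) mod prod n {mu..<D}"
    unfolding M by (rule mod_mult_div_nat)
  moreover have "n mu dvd prod n {mu..<D}" using assms by (intro dvd_prodI) auto
  ultimately show ?thesis by (simp add: mod_mod_cancel)
qed

lemma card_mixed_radix_digits:
  fixes n :: "nat \<Rightarrow> nat" and K :: "nat \<Rightarrow> nat set"
  assumes K: "\<And>mu. K mu \<subseteq> {..<n mu}"
  shows "card {p. p < prod n {..<D} * r \<and> (\<forall>mu<D. p div (prod n {..<mu} * r) mod n mu \<in> K mu)}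
         = r * (\<Prod>mu<D. card (K mu))"
proof (induction D)
  case (Suc D)
  let ?M = "prod n {..<D} * r"
  let ?R = "\<lambda>q. \<forall>mu<D. q div (prod n {..<mu} * r) mod n mu \<in> K mu"
  have digits: "(\<forall>mu<Suc D. p div (prod n {..<mu} * r) mod n mu \<in> K mu) \<longleftrightarrow> p div ?M \<in> K D \<and> ?R (p mod ?M)"
    if "p < n D * ?M" for p
  proof -
    have "p div ?M < n D" using that by (simp add: less_mult_imp_div_less)
    then show ?thesis by (auto simp: less_Suc_eq mixed_radix_digit_mod)
  qed
  have size: "prod n {..<Suc D} * r = n D * ?M" by (simp add: mult_ac)
  have "{p. p < prod n {..<Suc D} * r \<and> (\<forall>mu<Suc D. p div (prod n {..<mu} * r) mod n mu \<in> K mu)}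
      = {p. p < n D * ?M \<and> p div ?M \<in> K D \<and> ?R (p mod ?M)}"
    unfolding size by (intro Collect_cong) (use digits in blast)
  moreover have "card {p. p < n D * ?M \<and> p div ?M \<in> K D \<and> ?R (p mod ?M)}
      = card {d. d < n D \<and> d \<in> K D} * card {q. q < ?M \<and> ?R q}"
    by (rule card_div_mod_split)
  moreover have "{d. d < n D \<and> d \<in> K D} = K D" using K[of D] by auto
  ultimately show ?case using Suc by (simp add: mult_ac)
qed simp

lemma mat_mult_index:
  "A \<in> carrier_mat n m \<Longrightarrow> B \<in> carrier_mat m p \<Longrightarrow> i < n \<Longrightarrow> j < p \<Longrightarrow>
   (A * B) $$ (i, j) = (\<Sum>k<m. A $$ (i, k) * B $$ (k, j))"
  by (simp add: scalar_prod_def atLeast0LessThan)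

lemma mult_mat_vec_index:
  "A \<in> carrier_mat n m \<Longrightarrow> v \<in> carrier_vec m \<Longrightarrow> i < n \<Longrightarrow>
   (A *\<^sub>v v) $ i = (\<Sum>k<m. A $$ (i, k) * v $ k)"
  by (simp add: scalar_prod_def atLeast0LessThan)

lemma eq_zero_vec_iff: "(w :: 'a::zero vec) \<in> carrier_vec n \<Longrightarrow> w = 0\<^sub>v n \<longleftrightarrow> (\<forall>i<n. w $ i = 0)"
  by auto

lemma mult_mat_vec_index_sum:
  fixes N :: "'i \<Rightarrow> 'a::comm_semiring_0 mat"
  assumes "finite S" and M: "M \<in> carrier_mat m m" and N: "\<And>mu. mu \<in> S \<Longrightarrow> N mu \<in> carrier_mat m m"
    and MN: "\<And>q. q < m \<Longrightarrow> M $$ (p, q) = (\<Sum>mu\<in>S. N mu $$ (p, q))"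
    and v: "v \<in> carrier_vec m" and p: "p < m"
  shows "(M *\<^sub>v v) $ p = (\<Sum>mu\<in>S. (N mu *\<^sub>v v) $ p)"
proof -
  have "(M *\<^sub>v v) $ p = (\<Sum>q<m. M $$ (p, q) * v $ q)"
    by (rule mult_mat_vec_index[OF M v p])
  also have "\<dots> = (\<Sum>q<m. (\<Sum>mu\<in>S. N mu $$ (p, q)) * v $ q)"
    by (simp add: MN)
  also have "\<dots> = (\<Sum>mu\<in>S. \<Sum>q<m. N mu $$ (p, q) * v $ q)"
    by (simp add: sum_distrib_right) (rule sum.swap)
  also have "\<dots> = (\<Sum>mu\<in>S. (N mu *\<^sub>v v) $ p)"
    by (intro sum.cong refl) (rule mult_mat_vec_index[OF N v p, symmetric])
  finally show ?thesis .
qed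

lemma foldr_add_mat_carrier:
  "(\<And>x. x \<in> set xs \<Longrightarrow> T x \<in> carrier_mat m m) \<Longrightarrow> foldr (+) (map T xs) (0\<^sub>m m m) \<in> carrier_mat m m"
  by (induction xs) auto

lemma index_foldr_add_mat:
  "(\<And>x. x \<in> set xs \<Longrightarrow> T x \<in> carrier_mat m m) \<Longrightarrow> i < m \<Longrightarrow> j < m \<Longrightarrow>
   foldr (+) (map T xs) (0\<^sub>m m m) $$ (i, j) = (\<Sum>x\<leftarrow>xs. T x $$ (i, j))"
proof (induction xs)
  case (Cons a xs)
  then have "foldr (+) (map T xs) (0\<^sub>m m m) \<in> carrier_mat m m"
    by (intro foldr_add_mat_carrier) auto
  with Cons show ?case by simp
qed simp

lemma mat_kernel_mult_iff:
  assumes "M \<in> carrier_mat n n" and "S \<in> carrier_mat n n" and "w \<in> carrier_vec n"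
  shows "w \<in> mat_kernel (M * S) \<longleftrightarrow> S *\<^sub>v w \<in> mat_kernel M"
  using assms by (simp add: mat_kernel_def assoc_mult_mat_vec[of _ n n _ n] carrier_matD)

lemma square_eq_one_mat:
  fixes g :: "'a::field_char_0 mat"
  assumes g: "g \<in> carrier_mat r r" and h: "g * g + g * g = 2 \<cdot>\<^sub>m 1\<^sub>m r"
  shows "g * g = 1\<^sub>m r"
proof (rule eq_matI)
  fix i j assume i: "i < dim_row (1\<^sub>m r :: 'a mat)" and j: "j < dim_col (1\<^sub>m r :: 'a mat)"
  have "(g * g + g * g) $$ (i, j) = (2 \<cdot>\<^sub>m 1\<^sub>m r) $$ (i, j)" using h by simp
  then have "(g * g) $$ (i, j) + (g * g) $$ (i, j) = 2 * (1\<^sub>m r :: 'a mat) $$ (i, j)"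
    using i j g by simp
  then show "(g * g) $$ (i, j) = (1\<^sub>m r :: 'a mat) $$ (i, j)" by simp
qed (use g in auto)

lemma unipotent_mat_mult_inverse:
  fixes f :: "nat \<Rightarrow> nat \<Rightarrow> 'a::comm_ring_1"
  assumes nilpotent: "\<And>i k j. f i k * f k j = 0"
  shows "mat n n (\<lambda>(i, j). (if i = j then 1 else 0) + c * f i j)
       * mat n n (\<lambda>(i, j). (if i = j then 1 else 0) - c * f i j) = 1\<^sub>m n"
proof (rule eq_matI)
  let ?d = "\<lambda>i j. if i = j then 1 else (0::'a)"
  fix i j assume "i < dim_row (1\<^sub>m n :: 'a mat)" "j < dim_col (1\<^sub>m n :: 'a mat)"
  then have i: "i < n" and j: "j < n" by auto
  have expand: "(?d i k + c * f i k) * (?d k j - c * f k j)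
      = (if k = i then ?d k j - c * f k j else 0) + (if k = j then c * f i k else 0)" for k
    using nilpotent[of i k j] by (auto simp: algebra_simps)
  have "(mat n n (\<lambda>(i, j). ?d i j + c * f i j) * mat n n (\<lambda>(i, j). ?d i j - c * f i j)) $$ (i, j)
      = (\<Sum>k<n. (?d i k + c * f i k) * (?d k j - c * f k j))"
    using i j by (subst mat_mult_index[of _ n n _ n]) auto
  also have "\<dots> = (\<Sum>k<n. (if k = i then ?d k j - c * f k j else 0)) + (\<Sum>k<n. (if k = j then c * f i k else 0))"
    unfolding expand by (rule sum.distrib)
  also have "\<dots> = ?d i j" using i j by (simp add: sum.delta)
  finally show "(mat n n (\<lambda>(i, j). ?d i j + c * f i j) * mat n n (\<lambda>(i, j). ?d i j - c * f i j)) $$ (i, j)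
      = (1\<^sub>m n :: 'a mat) $$ (i, j)"
    using i j by simp
qed auto

lemma kernel_dim_full:
  assumes "mat_kernel A = carrier_vec m"
  shows "kernel.dim m (A :: complex mat) = m"
proof -
  have "(module_vec TYPE(complex) m)\<lparr>carrier := carrier_vec m\<rparr> = module_vec TYPE(complex) m"
    by (simp add: module_vec_def)
  then show ?thesis using assms vec_space.dim_is_n[of m] by simp
qed

definition diag_outside :: "nat set \<Rightarrow> nat \<Rightarrow> complex mat" where
  "diag_outside J m = mat m m (\<lambda>(i,j). if i = j \<and> i \<notin> J then 1 else 0)"

lemma mat_kernel_diag_outside: "mat_kernel (diag_outside J m) = {w \<in> carrier_vec m. \<forall>p<m. p \<notin> J \<longrightarrow> w $ p = 0}"
proof -
  have c: "diag_outside J m \<in> carrier_mat m m" by (simp add: diag_outside_def)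
  have "diag_outside J m *\<^sub>v w = 0\<^sub>v m \<longleftrightarrow> (\<forall>p<m. p \<notin> J \<longrightarrow> w $ p = 0)" if w: "w \<in> carrier_vec m" for w
  proof -
    have e: "(diag_outside J m *\<^sub>v w) $ p = (if p \<notin> J then w $ p else 0)" if p: "p < m" for p
    proof -
      have "(diag_outside J m *\<^sub>v w) $ p = (\<Sum>k<m. diag_outside J m $$ (p,k) * w $ k)" by (rule mult_mat_vec_index[OF c w p])
      also have "\<dots> = (\<Sum>k<m. if k = p then (if p \<notin> J then w $ k else 0) else 0)"
        by (intro sum.cong refl) (use p in \<open>auto simp: diag_outside_def\<close>)
      also have "\<dots> = (if p \<notin> J then w $ p else 0)" using p by (simp add: sum.delta)
      finally show ?thesis .
    qed
    have "diag_outside J m *\<^sub>v w \<in> carrier_vec m" using mult_mat_vec_carrier[OF c w] .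
    then have "diag_outside J m *\<^sub>v w = 0\<^sub>v m \<longleftrightarrow> (\<forall>p<m. (diag_outside J m *\<^sub>v w) $ p = 0)" by (rule eq_zero_vec_iff)
    also have "\<dots> \<longleftrightarrow> (\<forall>p<m. p \<notin> J \<longrightarrow> w $ p = 0)" using e by auto
    finally show ?thesis .
  qed
  then show ?thesis using c unfolding mat_kernel_def by auto
qed

lemma kernel_dim_diag_outside: "kernel.dim m (diag_outside J m) = card (J \<inter> {..<m})"
proof (induction m)
  case 0
  have "mat_kernel (diag_outside J 0) = carrier_vec 0" by (auto simp: mat_kernel_diag_outside)
  then show ?case using kernel_dim_full by simp
next
  case (Suc m)
  let ?d = "mat 1 1 (\<lambda>_. if m \<notin> J then 1 else 0) :: complex mat"
  have eq: "diag_outside J (m + 1) = four_block_mat (diag_outside J m) (0\<^sub>m m 1) (0\<^sub>m 1 m) ?d"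
    by (rule eq_matI) (auto simp: diag_outside_def four_block_mat_def less_Suc_eq)
  have "kernel.dim (m+1) (diag_outside J (m+1)) = kernel.dim m (diag_outside J m) + kernel.dim 1 ?d"
    by (rule kernel_four_block_0_mat[OF eq]) (auto simp: diag_outside_def)
  moreover have "kernel.dim 1 ?d = (if m \<in> J then 1 else 0)"
  proof (cases "m \<in> J")
    case True
    have "?d *\<^sub>v x = 0\<^sub>v 1" if "x \<in> carrier_vec 1" for x
      using True that by (intro eq_vecI) (auto simp: scalar_prod_def)
    then have "mat_kernel ?d = carrier_vec 1" using True by (auto simp: mat_kernel_def)
    then show ?thesis using kernel_dim_full True by simp
  next
    case False
    then have "?d = 1\<^sub>m 1" by (auto simp: one_mat_def)
    then show ?thesis using False kernel_one_mat(1)[of 1] by simp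
  qed
  moreover have "card (J \<inter> {..<m+1}) = card (J \<inter> {..<m}) + (if m \<in> J then 1 else 0)"
  proof -
    have "J \<inter> {..<m+1} = (J \<inter> {..<m}) \<union> (if m \<in> J then {m} else {})" by (auto simp: less_Suc_eq)
    then show ?thesis by (auto simp: card_insert_if)
  qed
  ultimately show ?case using Suc by simp
qed

lemma kernel_dim_coordinate_subspace:
  assumes K: "mat_kernel A = {w \<in> carrier_vec m. \<forall>p<m. p \<notin> J \<longrightarrow> w $ p = 0}"
  shows "kernel.dim m (A :: complex mat) = card (J \<inter> {..<m})"
proof -
  have "mat_kernel A = mat_kernel (diag_outside J m)" by (simp add: K mat_kernel_diag_outside)
  then show ?thesis using kernel_dim_diag_outside by simp
qed

section \<open>Kronecker products\<close>

lemma dim_row_kron [simp]: "dim_row (kron A B) = dim_row A * dim_row B"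
  and dim_col_kron [simp]: "dim_col (kron A B) = dim_col A * dim_col B"
  by (simp_all add: kron_def)

lemma index_kron [simp]:
  "i < dim_row A * dim_row B \<Longrightarrow> j < dim_col A * dim_col B \<Longrightarrow>
   kron A B $$ (i, j) = A $$ (i div dim_row B, j div dim_col B) * B $$ (i mod dim_row B, j mod dim_col B)"
  by (simp add: kron_def)

lemma kron_carrier_mat [intro, simp]:
  "A \<in> carrier_mat ra ca \<Longrightarrow> B \<in> carrier_mat rb cb \<Longrightarrow> kron A B \<in> carrier_mat (ra * rb) (ca * cb)"
  unfolding carrier_mat_def by simp

lemma kron_mult:
  fixes A :: "'a::comm_semiring_0 mat"
  assumes A: "A \<in> carrier_mat a1 a2" and B: "B \<in> carrier_mat b1 b2"
    and C: "C \<in> carrier_mat a2 a3" and E: "E \<in> carrier_mat b2 b3"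
  shows "kron A B * kron C E = kron (A * C) (B * E)"
proof (rule eq_matI)
  fix i j assume "i < dim_row (kron (A * C) (B * E))" "j < dim_col (kron (A * C) (B * E))"
  then have i: "i < a1 * b1" and j: "j < a3 * b3" using A B C E by auto
  then have "b1 > 0" "b3 > 0" by (auto intro: gr0I)
  then have idx: "i div b1 < a1" "i mod b1 < b1" "j div b3 < a3" "j mod b3 < b3"
    using i j by (auto simp: less_mult_imp_div_less)
  have "(kron A B * kron C E) $$ (i, j)
      = (\<Sum>k1<a2. \<Sum>k2<b2. kron A B $$ (i, k1 * b2 + k2) * kron C E $$ (k1 * b2 + k2, j))"
    using mat_mult_index[OF kron_carrier_mat[OF A B] kron_carrier_mat[OF C E] i j]
    by (simp add: sum_lessThan_mult_nat)
  also have "\<dots> = (\<Sum>k1<a2. \<Sum>k2<b2. (A $$ (i div b1, k1) * C $$ (k1, j div b3))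
                                        * (B $$ (i mod b1, k2) * E $$ (k2, j mod b3)))"
    using A B C E i j mult_add_less_mult by (intro sum.cong refl) (auto simp: mult_ac)
  also have "\<dots> = kron (A * C) (B * E) $$ (i, j)"
    using A B C E i j idx by (simp add: sum_product scalar_prod_def atLeast0LessThan)
  finally show "(kron A B * kron C E) $$ (i, j) = kron (A * C) (B * E) $$ (i, j)" .
qed (use A B C E in auto)

lemma kron_assoc:
  fixes A :: "'a::semigroup_mult mat"
  assumes A: "A \<in> carrier_mat a1 a2" and B: "B \<in> carrier_mat b1 b2" and C: "C \<in> carrier_mat c1 c2"
  shows "kron (kron A B) C = kron A (kron B C)"
proof (rule eq_matI)
  fix i j assume "i < dim_row (kron A (kron B C))" "j < dim_col (kron A (kron B C))"
  then have i: "i < a1 * (b1 * c1)" and j: "j < a2 * (b2 * c2)" using A B C by auto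
  have "0 < a1 * (b1 * c1)" "0 < a2 * (b2 * c2)" using i j by linarith+
  then have pos: "b1 > 0" "c1 > 0" "b2 > 0" "c2 > 0" by simp_all
  have i1: "i div c1 < a1 * b1" and j1: "j div c2 < a2 * b2"
    using i j pos by (simp_all add: less_mult_imp_div_less mult.assoc)
  have "kron (kron A B) C $$ (i, j) = kron A B $$ (i div c1, j div c2) * C $$ (i mod c1, j mod c2)"
    using A B C i j by (subst index_kron) (auto simp: mult.assoc)
  also have "kron A B $$ (i div c1, j div c2)
      = A $$ (i div c1 div b1, j div c2 div b2) * B $$ (i div c1 mod b1, j div c2 mod b2)"
    using A B i1 j1 by (subst index_kron) auto
  also have "A $$ (i div c1 div b1, j div c2 div b2) * B $$ (i div c1 mod b1, j div c2 mod b2)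
             * C $$ (i mod c1, j mod c2)
      = A $$ (i div (b1 * c1), j div (b2 * c2)) * kron B C $$ (i mod (b1 * c1), j mod (b2 * c2))"
    using B C pos by (simp add: mod_mult_div_nat div_mult_div_nat mod_mod_cancel mult.assoc)
  also have "\<dots> = kron A (kron B C) $$ (i, j)"
    using A B C i j by (subst index_kron) auto
  finally show "kron (kron A B) C $$ (i, j) = kron A (kron B C) $$ (i, j)" .
qed (use A B C in \<open>auto simp: mult.assoc\<close>)

lemma kron_one_mat: "kron (1\<^sub>m a) (1\<^sub>m b) = (1\<^sub>m (a * b) :: 'a::semiring_1 mat)"
proof (rule eq_matI)
  fix i j assume "i < dim_row (1\<^sub>m (a * b) :: 'a mat)" "j < dim_col (1\<^sub>m (a * b) :: 'a mat)"
  then have i: "i < a * b" and j: "j < a * b" by auto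
  have "(i div b = j div b \<and> i mod b = j mod b) = (i = j)"
    by (metis div_mult_mod_eq)
  then show "kron (1\<^sub>m a) (1\<^sub>m b) $$ (i, j) = (1\<^sub>m (a * b) :: 'a mat) $$ (i, j)"
    using i j by (auto simp: less_mult_imp_div_less mod_less_of_less_mult)
qed auto

lemma kron_one_mat_1_left: "A \<in> carrier_mat a c \<Longrightarrow> kron (1\<^sub>m 1) A = (A :: 'a::semiring_1 mat)"
  by (rule eq_matI) auto

lemma kron_add_right:
  assumes "B \<in> carrier_mat b c" "C \<in> carrier_mat b c"
  shows "kron A (B + C) = kron A B + kron (A :: 'a::semiring mat) C"
proof (rule eq_matI)
  fix i j assume "i < dim_row (kron A B + kron A C)" "j < dim_col (kron A B + kron A C)"
  then have "i < dim_row A * b" "j < dim_col A * c" using assms by auto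
  then show "kron A (B + C) $$ (i, j) = (kron A B + kron A C) $$ (i, j)"
    using assms by (simp add: distrib_left mod_less_of_less_mult)
qed (use assms in auto)

lemma kron_smult_right: "kron A (k \<cdot>\<^sub>m B) = k \<cdot>\<^sub>m kron (A :: 'a::comm_semiring_0 mat) B"
proof (rule eq_matI)
  fix i j assume "i < dim_row (k \<cdot>\<^sub>m kron A B)" "j < dim_col (k \<cdot>\<^sub>m kron A B)"
  then show "kron A (k \<cdot>\<^sub>m B) $$ (i, j) = (k \<cdot>\<^sub>m kron A B) $$ (i, j)"
    by (simp add: mod_less_of_less_mult mult.left_commute)
qed auto

abbreviation kron_list :: "'a::semiring_1 mat list \<Rightarrow> 'a mat" where
  "kron_list Ms \<equiv> foldr kron Ms (1\<^sub>m 1)"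

lemma kron_list_carrier:
  "(\<And>y. y \<in> set ys \<Longrightarrow> f y \<in> carrier_mat (n y) (n y)) \<Longrightarrow>
   kron_list (map f ys) \<in> carrier_mat (prod_list (map n ys)) (prod_list (map n ys))"
  by (induction ys) auto

lemma kron_list_mult:
  fixes f g :: "'b \<Rightarrow> 'a::comm_semiring_1 mat"
  assumes "\<And>y. y \<in> set ys \<Longrightarrow> f y \<in> carrier_mat (n y) (n y)"
    and "\<And>y. y \<in> set ys \<Longrightarrow> g y \<in> carrier_mat (n y) (n y)"
  shows "kron_list (map f ys) * kron_list (map g ys) = kron_list (map (\<lambda>y. f y * g y) ys)"
  using assms
proof (induction ys)
  case (Cons y ys)
  have "kron_list (map f ys) \<in> carrier_mat (prod_list (map n ys)) (prod_list (map n ys))"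
    and "kron_list (map g ys) \<in> carrier_mat (prod_list (map n ys)) (prod_list (map n ys))"
    using Cons.prems by (intro kron_list_carrier; auto)+
  with Cons show ?case by (simp add: kron_mult[of _ "n y" "n y" _ _ _ _ "n y"])
qed simp

lemma kron_list_one: "kron_list (map (\<lambda>y. 1\<^sub>m (n y)) ys) = (1\<^sub>m (prod_list (map n ys)) :: 'a::semiring_1 mat)"
  by (induction ys) (auto simp: kron_one_mat)

lemma kron_list_append:
  fixes f :: "'b \<Rightarrow> 'a::semiring_1 mat"
  assumes "\<And>y. y \<in> set (xs @ ys) \<Longrightarrow> f y \<in> carrier_mat (n y) (n y)"
  shows "kron_list (map f (xs @ ys)) = kron (kron_list (map f xs)) (kron_list (map f ys))"
  using assms
proof (induction xs)
  case Nil
  then show ?case using kron_one_mat_1_left[OF kron_list_carrier, of ys f n] by simp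
next
  case (Cons x xs)
  have x: "f x \<in> carrier_mat (n x) (n x)" using Cons.prems by simp
  have xs: "kron_list (map f xs) \<in> carrier_mat (prod_list (map n xs)) (prod_list (map n xs))"
    and ys: "kron_list (map f ys) \<in> carrier_mat (prod_list (map n ys)) (prod_list (map n ys))"
    using Cons.prems by (intro kron_list_carrier; auto)+
  show ?case using Cons kron_assoc[OF x xs ys] by simp
qed

(* Indices below a * (n * b) are read in mixed radix as x * (n * b) + (k * b + y); the fibre
   fixes the outer digit x and the inner digit y. *)
definition fibre :: "'a vec \<Rightarrow> nat \<Rightarrow> nat \<Rightarrow> nat \<Rightarrow> nat \<Rightarrow> 'a vec" where
  "fibre w n b x y = vec n (\<lambda>k. w $ (x * (n * b) + (k * b + y)))"

lemma index_kron_one_kron_one: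
  fixes C :: "complex mat"
  assumes C: "C \<in> carrier_mat n n" and "x < a" "i < n" "y < b" "x' < a" "k < n" "y' < b"
  shows "kron (1\<^sub>m a) (kron C (1\<^sub>m b)) $$ (x * (n * b) + (i * b + y), x' * (n * b) + (k * b + y'))
         = (if x' = x \<and> y' = y then C $$ (i, k) else 0)"
proof -
  have ib: "i * b + y < n * b" and kb: "k * b + y' < n * b"
    using assms by (simp_all add: mult_add_less_mult)
  then have "x * (n * b) + (i * b + y) < a * (n * b)" "x' * (n * b) + (k * b + y') < a * (n * b)"
    using assms by (simp_all add: mult_add_less_mult)
  then show ?thesis
    using C ib kb assms by (simp add: mult_add_div_nat mult_add_mod_nat)
qed

lemma index_kron_one_kron_one_mult_vec:
  fixes C :: "complex mat"
  assumes C: "C \<in> carrier_mat n n" and w: "w \<in> carrier_vec (a * (n * b))"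
    and x: "x < a" and i: "i < n" and y: "y < b"
  shows "(kron (1\<^sub>m a) (kron C (1\<^sub>m b)) *\<^sub>v w) $ (x * (n * b) + (i * b + y)) = (C *\<^sub>v fibre w n b x y) $ i"
proof -
  let ?M = "kron (1\<^sub>m a) (kron C (1\<^sub>m b))" and ?p = "x * (n * b) + (i * b + y)"
  let ?w = "\<lambda>x' k y'. w $ (x' * (n * b) + (k * b + y'))"
  have p: "?p < a * (n * b)" using x i y by (simp add: mult_add_less_mult)
  have M: "?M \<in> carrier_mat (a * (n * b)) (a * (n * b))" using C by auto
  have "(?M *\<^sub>v w) $ ?p = (\<Sum>x'<a. \<Sum>k<n. \<Sum>y'<b. ?M $$ (?p, x' * (n * b) + (k * b + y')) * ?w x' k y')"
    unfolding mult_mat_vec_index[OF M w p] by (simp only: sum_lessThan_mult_nat)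
  also have "\<dots> = (\<Sum>x'<a. \<Sum>k<n. \<Sum>y'<b. if x' = x \<and> y' = y then C $$ (i, k) * ?w x k y else 0)"
    using C x i y by (intro sum.cong refl) (simp add: index_kron_one_kron_one)
  also have "\<dots> = (\<Sum>x'<a. if x' = x then (\<Sum>k<n. C $$ (i, k) * ?w x k y) else 0)"
    using y by (intro sum.cong refl) (auto simp: sum.delta)
  also have "\<dots> = (\<Sum>k<n. C $$ (i, k) * ?w x k y)"
    using x by (simp add: sum.delta)
  also have "\<dots> = (C *\<^sub>v fibre w n b x y) $ i"
    by (subst mult_mat_vec_index[OF C _ i]) (simp_all add: fibre_def)
  finally show ?thesis .
qed

lemma kron_one_kron_one_mult_vec_eq_0_iff:
  fixes C :: "complex mat"
  assumes C: "C \<in> carrier_mat n n" and w: "w \<in> carrier_vec (a * (n * b))"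
  shows "kron (1\<^sub>m a) (kron C (1\<^sub>m b)) *\<^sub>v w = 0\<^sub>v (a * (n * b))
         \<longleftrightarrow> (\<forall>x < a. \<forall>y < b. C *\<^sub>v fibre w n b x y = 0\<^sub>v n)"
proof (intro iffI allI impI)
  let ?M = "kron (1\<^sub>m a) (kron C (1\<^sub>m b))"
  fix x y assume M: "?M *\<^sub>v w = 0\<^sub>v (a * (n * b))" and x: "x < a" and y: "y < b"
  show "C *\<^sub>v fibre w n b x y = 0\<^sub>v n"
  proof (rule eq_vecI)
    fix i assume "i < dim_vec (0\<^sub>v n :: complex vec)"
    then have i: "i < n" by simp
    then have "x * (n * b) + (i * b + y) < a * (n * b)"
      using x y by (intro mult_add_less_mult)
    then show "(C *\<^sub>v fibre w n b x y) $ i = 0\<^sub>v n $ i"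
      using index_kron_one_kron_one_mult_vec[OF C w x i y] M i by simp
  qed (use C in simp)
next
  let ?M = "kron (1\<^sub>m a) (kron C (1\<^sub>m b))"
  assume fib: "\<forall>x < a. \<forall>y < b. C *\<^sub>v fibre w n b x y = 0\<^sub>v n"
  show "?M *\<^sub>v w = 0\<^sub>v (a * (n * b))"
  proof (rule eq_vecI)
    fix p assume "p < dim_vec (0\<^sub>v (a * (n * b)) :: complex vec)"
    then have p: "p < a * (n * b)" by simp
    note d = mixed_radix_decomp[OF p]
    have "(?M *\<^sub>v w) $ p = (C *\<^sub>v fibre w n b (p div (n * b)) (p mod b)) $ (p div b mod n)"
      using index_kron_one_kron_one_mult_vec[OF C w d(2,3,4)] d(1) by simp
    then show "(?M *\<^sub>v w) $ p = 0\<^sub>v (a * (n * b)) $ p"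
      using fib d p by simp
  qed (use C in simp)
qed

lemma kron_one_kron_one_mult_vec_eq_0_iff_coords:
  fixes C :: "complex mat"
  assumes C: "C \<in> carrier_mat n n"
    and K: "mat_kernel C = {v \<in> carrier_vec n. \<forall>i<n. i \<notin> K \<longrightarrow> v $ i = 0}"
    and w: "w \<in> carrier_vec (a * (n * b))"
  shows "kron (1\<^sub>m a) (kron C (1\<^sub>m b)) *\<^sub>v w = 0\<^sub>v (a * (n * b))
         \<longleftrightarrow> (\<forall>p < a * (n * b). p div b mod n \<notin> K \<longrightarrow> w $ p = 0)"
proof -
  have "C *\<^sub>v fibre w n b x y = 0\<^sub>v n \<longleftrightarrow> (\<forall>k<n. k \<notin> K \<longrightarrow> w $ (x * (n * b) + (k * b + y)) = 0)" for x y
  proof -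
    have "C *\<^sub>v fibre w n b x y = 0\<^sub>v n \<longleftrightarrow> fibre w n b x y \<in> mat_kernel C"
      using mat_kernel[OF C] by (simp add: fibre_def)
    also have "\<dots> \<longleftrightarrow> (\<forall>k<n. k \<notin> K \<longrightarrow> fibre w n b x y $ k = 0)"
      unfolding K by (simp add: fibre_def)
    finally show ?thesis by (simp add: fibre_def)
  qed
  moreover have "(\<forall>x < a. \<forall>y < b. \<forall>k<n. k \<notin> K \<longrightarrow> w $ (x * (n * b) + (k * b + y)) = 0)
      \<longleftrightarrow> (\<forall>p < a * (n * b). p div b mod n \<notin> K \<longrightarrow> w $ p = 0)"
  proof (intro iffI allI impI)
    fix p assume "\<forall>x < a. \<forall>y < b. \<forall>k<n. k \<notin> K \<longrightarrow> w $ (x * (n * b) + (k * b + y)) = 0"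
      and p: "p < a * (n * b)" and "p div b mod n \<notin> K"
    then show "w $ p = 0" using mixed_radix_decomp[OF p] by metis
  next
    fix x y k assume "\<forall>p < a * (n * b). p div b mod n \<notin> K \<longrightarrow> w $ p = 0"
      and "x < a" "y < b" "k < n" "k \<notin> K"
    then show "w $ (x * (n * b) + (k * b + y)) = 0"
      by (simp add: mult_add_less_mult mixed_radix_digit)
  qed
  ultimately show ?thesis by (simp add: kron_one_kron_one_mult_vec_eq_0_iff[OF C w])
qed

section \<open>Skew-Hermitian matrices\<close>

definition signed_hermitian :: "complex \<Rightarrow> nat \<Rightarrow> complex mat \<Rightarrow> bool" where
  "signed_hermitian \<sigma> n M \<longleftrightarrow>
     M \<in> carrier_mat n n \<and> (\<forall>i<n. \<forall>j<n. M $$ (j, i) = \<sigma> * cnj (M $$ (i, j)))"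

lemma signed_hermitian_one_mat: "signed_hermitian 1 n (1\<^sub>m n)"
  by (auto simp: signed_hermitian_def)

lemma signed_hermitian_kron:
  assumes "signed_hermitian \<sigma> a A" and "signed_hermitian \<tau> b B"
  shows "signed_hermitian (\<sigma> * \<tau>) (a * b) (kron A B)"
proof -
  have A: "A \<in> carrier_mat a a" and A': "\<And>i j. i < a \<Longrightarrow> j < a \<Longrightarrow> A $$ (j, i) = \<sigma> * cnj (A $$ (i, j))"
    and B: "B \<in> carrier_mat b b" and B': "\<And>i j. i < b \<Longrightarrow> j < b \<Longrightarrow> B $$ (j, i) = \<tau> * cnj (B $$ (i, j))"
    using assms unfolding signed_hermitian_def by blast+
  have "kron A B $$ (j, i) = \<sigma> * \<tau> * cnj (kron A B $$ (i, j))" if "i < a * b" "j < a * b" for i j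
  proof -
    have idx: "i div b < a" "j div b < a" "i mod b < b" "j mod b < b"
      using that by (auto simp: less_mult_imp_div_less mod_less_of_less_mult)
    show ?thesis
      using A B that A'[OF idx(1,2)] B'[OF idx(3,4)] by (simp add: mult_ac)
  qed
  then show ?thesis unfolding signed_hermitian_def using kron_carrier_mat[OF A B] by blast
qed

lemma skew_hermitian_square_form:
  assumes Y: "signed_hermitian (-1) n Y" and v: "v \<in> carrier_vec n"
  shows "((Y * Y) *\<^sub>v v) \<bullet>c v = - ((Y *\<^sub>v v) \<bullet>c (Y *\<^sub>v v))"
proof -
  define w where "w = Y *\<^sub>v v"
  have Yc: "Y \<in> carrier_mat n n" using Y by (simp add: signed_hermitian_def)
  then have w: "w \<in> carrier_vec n" unfolding w_def using v by (rule mult_mat_vec_carrier)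
  have skew: "Y $$ (p, k) = - cnj (Y $$ (k, p))" if "p < n" "k < n" for p k
  proof -
    have "Y $$ (p, k) = -1 * cnj (Y $$ (k, p))"
      using Y that unfolding signed_hermitian_def by blast
    then show ?thesis by simp
  qed
  have "((Y * Y) *\<^sub>v v) \<bullet>c v = (\<Sum>p<n. (Y *\<^sub>v w) $ p * cnj (v $ p))"
    using Yc v by (simp add: assoc_mult_mat_vec w_def scalar_prod_def atLeast0LessThan)
  also have "\<dots> = (\<Sum>p<n. (\<Sum>k<n. Y $$ (p, k) * w $ k) * cnj (v $ p))"
    by (intro sum.cong refl) (subst mult_mat_vec_index[OF Yc w]; simp)
  also have "\<dots> = (\<Sum>p<n. \<Sum>k<n. w $ k * (Y $$ (p, k) * cnj (v $ p)))"
    by (simp add: sum_distrib_left sum_distrib_right mult_ac)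
  also have "\<dots> = (\<Sum>k<n. w $ k * (\<Sum>p<n. Y $$ (p, k) * cnj (v $ p)))"
    using sum.swap[of "\<lambda>p k. w $ k * (Y $$ (p, k) * cnj (v $ p))" "{..<n}" "{..<n}"]
    by (simp add: sum_distrib_left)
  also have "\<dots> = (\<Sum>k<n. - (w $ k * cnj (w $ k)))"
  proof (intro sum.cong refl)
    fix k assume "k \<in> {..<n}"
    then have "(\<Sum>p<n. Y $$ (p, k) * cnj (v $ p)) = (\<Sum>p<n. - cnj (Y $$ (k, p) * v $ p))"
      by (intro sum.cong refl) (use skew[of _ k] in simp)
    also have "\<dots> = - cnj (\<Sum>p<n. Y $$ (k, p) * v $ p)"
      by (simp add: sum_negf)
    also have "\<dots> = - cnj (w $ k)"
      unfolding w_def using \<open>k \<in> {..<n}\<close> by (subst mult_mat_vec_index[OF Yc v]) simp_all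
    finally show "w $ k * (\<Sum>p<n. Y $$ (p, k) * cnj (v $ p)) = - (w $ k * cnj (w $ k))" by simp
  qed
  also have "\<dots> = - (w \<bullet>c w)"
    using w by (simp add: scalar_prod_def sum_negf atLeast0LessThan)
  finally show ?thesis by (simp add: w_def)
qed

lemma kernel_sum_skew_hermitian_squares:
  fixes Y :: "'i \<Rightarrow> complex mat"
  assumes "finite S" and Y: "\<And>mu. mu \<in> S \<Longrightarrow> signed_hermitian (-1) n (Y mu)"
    and v: "v \<in> carrier_vec n"
    and zero: "\<And>p. p < n \<Longrightarrow> (\<Sum>mu\<in>S. ((Y mu * Y mu) *\<^sub>v v) $ p) = 0"
    and "mu \<in> S"
  shows "Y mu *\<^sub>v v = 0\<^sub>v n"
proof -
  have Yc: "Y nu \<in> carrier_mat n n" if "nu \<in> S" for nu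
    using Y[OF that] by (simp add: signed_hermitian_def)
  have "0 = (\<Sum>p<n. (\<Sum>nu\<in>S. ((Y nu * Y nu) *\<^sub>v v) $ p) * cnj (v $ p))"
    using zero by simp
  also have "\<dots> = (\<Sum>nu\<in>S. ((Y nu * Y nu) *\<^sub>v v) \<bullet>c v)"
    using v Yc by (simp add: scalar_prod_def sum_distrib_right atLeast0LessThan) (rule sum.swap)
  also have "\<dots> = - (\<Sum>nu\<in>S. (Y nu *\<^sub>v v) \<bullet>c (Y nu *\<^sub>v v))"
    unfolding sum_negf[symmetric] by (intro sum.cong refl) (simp add: skew_hermitian_square_form[OF Y v])
  finally have "(\<Sum>nu\<in>S. (Y nu *\<^sub>v v) \<bullet>c (Y nu *\<^sub>v v)) = 0" by simp
  (* nonnegativity refers to the partial order on complex numbers used by Jordan_Normal_Form *)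
  then have "(Y mu *\<^sub>v v) \<bullet>c (Y mu *\<^sub>v v) = 0"
    using \<open>finite S\<close> \<open>mu \<in> S\<close> by (simp add: sum_nonneg_eq_0_iff conjugate_square_ge_0_vec)
  then show ?thesis
    using conjugate_square_eq_0_vec[OF mult_mat_vec_carrier[OF Yc[OF \<open>mu \<in> S\<close>] v]] by simp
qed

definition nverts_prod :: "factor list \<Rightarrow> nat" where
  "nverts_prod Gs = (\<Prod>G\<leftarrow>Gs. nverts G)"

(* As in dirac_term, the factor Gs ! 0 is the rightmost tensor factor. *)
definition kron_factors :: "factor list \<Rightarrow> (nat \<Rightarrow> complex mat) \<Rightarrow> complex mat" where
  "kron_factors Gs M = kron_list (map M (rev [0..<length Gs]))"

definition act_on_factor :: "factor list \<Rightarrow> nat \<Rightarrow> complex mat \<Rightarrow> complex mat" where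
  "act_on_factor Gs mu C = kron_factors Gs (\<lambda>nu. if nu = mu then C else 1\<^sub>m (nverts (Gs ! nu)))"

lemma prod_list_map_rev_upt: "prod_list (map f (rev [a..<b])) = (\<Prod>i = a..<b. f i)"
  by (simp add: rev_map[symmetric] prod_list.rev prod.distinct_set_conv_list[symmetric])

lemma nverts_prod_eq: "nverts_prod Gs = (\<Prod>nu < length Gs. nverts (Gs ! nu))"
proof -
  have "map nverts Gs = map (\<lambda>nu. nverts (Gs ! nu)) [0..<length Gs]"
    by (rule nth_equalityI) auto
  then show ?thesis
    by (simp add: nverts_prod_def prod.distinct_set_conv_list[symmetric] atLeast0LessThan)
qed

lemma nverts_prod_split:
  assumes "mu < length Gs"
  shows "nverts_prod Gs = (\<Prod>nu = Suc mu..<length Gs. nverts (Gs ! nu)) * nverts (Gs ! mu)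
                          * (\<Prod>nu < mu. nverts (Gs ! nu))"
proof -
  let ?n = "\<lambda>nu. nverts (Gs ! nu)"
  have "prod ?n {0..<length Gs} = prod ?n {0..<mu} * prod ?n {mu..<length Gs}"
    using assms by (intro prod.atLeastLessThan_concat[symmetric]) auto
  moreover have "prod ?n {mu..<length Gs} = ?n mu * prod ?n {Suc mu..<length Gs}"
    using assms by (rule prod.atLeast_Suc_lessThan)
  ultimately show ?thesis by (simp add: nverts_prod_eq atLeast0LessThan mult_ac)
qed

lemma kron_factors_carrier:
  "(\<And>nu. M nu \<in> carrier_mat (nverts (Gs ! nu)) (nverts (Gs ! nu))) \<Longrightarrow>
   kron_factors Gs M \<in> carrier_mat (nverts_prod Gs) (nverts_prod Gs)"
  using kron_list_carrier[of "rev [0..<length Gs]" M "\<lambda>nu. nverts (Gs ! nu)"]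
  by (simp add: kron_factors_def prod_list_map_rev_upt nverts_prod_eq atLeast0LessThan)

lemma kron_factors_mult:
  "(\<And>nu. M nu \<in> carrier_mat (nverts (Gs ! nu)) (nverts (Gs ! nu))) \<Longrightarrow>
   (\<And>nu. M' nu \<in> carrier_mat (nverts (Gs ! nu)) (nverts (Gs ! nu))) \<Longrightarrow>
   kron_factors Gs M * kron_factors Gs M' = kron_factors Gs (\<lambda>nu. M nu * M' nu)"
  unfolding kron_factors_def by (rule kron_list_mult) auto

lemma kron_factors_one: "kron_factors Gs (\<lambda>nu. 1\<^sub>m (nverts (Gs ! nu))) = 1\<^sub>m (nverts_prod Gs)"
  using kron_list_one[of "\<lambda>nu. nverts (Gs ! nu)" "rev [0..<length Gs]"]
  by (simp add: kron_factors_def prod_list_map_rev_upt nverts_prod_eq atLeast0LessThan)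

lemma kron_factors_inverse:
  assumes "\<And>nu. M nu \<in> carrier_mat (nverts (Gs ! nu)) (nverts (Gs ! nu))"
    and "\<And>nu. M' nu \<in> carrier_mat (nverts (Gs ! nu)) (nverts (Gs ! nu))"
    and "\<And>nu. M nu * M' nu = 1\<^sub>m (nverts (Gs ! nu))"
  shows "kron_factors Gs M * kron_factors Gs M' = 1\<^sub>m (nverts_prod Gs)"
  using assms by (simp add: kron_factors_mult kron_factors_one)

lemma act_on_factor_carrier:
  "C \<in> carrier_mat (nverts (Gs ! mu)) (nverts (Gs ! mu)) \<Longrightarrow>
   act_on_factor Gs mu C \<in> carrier_mat (nverts_prod Gs) (nverts_prod Gs)"
  unfolding act_on_factor_def by (rule kron_factors_carrier) auto

lemma act_on_factor_eq_kron:
  assumes mu: "mu < length Gs" and C: "C \<in> carrier_mat (nverts (Gs ! mu)) (nverts (Gs ! mu))"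
  shows "act_on_factor Gs mu C = kron (1\<^sub>m (\<Prod>nu = Suc mu..<length Gs. nverts (Gs ! nu)))
                                      (kron C (1\<^sub>m (\<Prod>nu < mu. nverts (Gs ! nu))))"
proof -
  let ?n = "\<lambda>nu. nverts (Gs ! nu)" and ?M = "\<lambda>nu. if nu = mu then C else 1\<^sub>m (nverts (Gs ! nu))"
  have "[0..<length Gs] = [0..<mu] @ mu # [Suc mu..<length Gs]"
    using mu by (metis upt_add_eq_append upt_conv_Cons le_add1 le_add_diff_inverse less_imp_le_nat
                       add_0)
  then have split: "rev [0..<length Gs] = rev [Suc mu..<length Gs] @ mu # rev [0..<mu]" by simp
  have ones: "kron_list (map ?M (rev [a..<b])) = 1\<^sub>m (\<Prod>nu = a..<b. ?n nu)" if "mu \<notin> {a..<b}" for a b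
  proof -
    have "map ?M (rev [a..<b]) = map (\<lambda>nu. 1\<^sub>m (?n nu)) (rev [a..<b])"
      using that by (intro map_cong) auto
    then show ?thesis using kron_list_one[of ?n "rev [a..<b]"] by (simp only: prod_list_map_rev_upt)
  qed
  have "act_on_factor Gs mu C = kron (kron_list (map ?M (rev [Suc mu..<length Gs])))
                                     (kron_list (map ?M (mu # rev [0..<mu])))"
    unfolding act_on_factor_def kron_factors_def split
    by (rule kron_list_append[of _ _ _ ?n]) (use C in auto)
  then show ?thesis using ones[of "Suc mu" "length Gs"] ones[of 0 mu] by (simp add: atLeast0LessThan)
qed

lemma signed_hermitian_act_on_factor:
  assumes "mu < length Gs" and "signed_hermitian \<sigma> (nverts (Gs ! mu)) C"
  shows "signed_hermitian \<sigma> (nverts_prod Gs) (act_on_factor Gs mu C)"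
proof -
  have "C \<in> carrier_mat (nverts (Gs ! mu)) (nverts (Gs ! mu))"
    using assms(2) by (simp add: signed_hermitian_def)
  then show ?thesis
    using signed_hermitian_kron[OF signed_hermitian_one_mat
            signed_hermitian_kron[OF assms(2) signed_hermitian_one_mat]]
    by (simp add: act_on_factor_eq_kron assms(1) nverts_prod_split[OF assms(1)] mult.assoc)
qed

lemma act_on_factor_commute:
  assumes "mu \<noteq> nu"
    and "C \<in> carrier_mat (nverts (Gs ! mu)) (nverts (Gs ! mu))"
    and "E \<in> carrier_mat (nverts (Gs ! nu)) (nverts (Gs ! nu))"
  shows "act_on_factor Gs mu C * act_on_factor Gs nu E = act_on_factor Gs nu E * act_on_factor Gs mu C"
  using assms unfolding act_on_factor_def
  by (subst (1 2) kron_factors_mult) (auto intro!: arg_cong[where f = "kron_factors Gs"])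

section \<open>The kernel of the Dirac operator\<close>

lemma A_as_carrier [simp]: "A_as G \<in> carrier_mat (nverts G) (nverts G)"
  by (simp add: A_as_def)

lemma A_as_skew_hermitian: "valid_factor G \<Longrightarrow> signed_hermitian (-1) (nverts G) (A_as G)"
proof -
  assume "valid_factor G"
  then have "\<not> (edge G i j \<and> edge G j i)" for i j by (cases G) auto
  then show ?thesis by (auto simp: signed_hermitian_def A_as_def)
qed

definition adj_factor :: "factor list \<Rightarrow> nat \<Rightarrow> complex mat" where
  "adj_factor Gs mu = act_on_factor Gs mu (A_as (Gs ! mu))"

lemma adj_factor_carrier: "adj_factor Gs mu \<in> carrier_mat (nverts_prod Gs) (nverts_prod Gs)"
  unfolding adj_factor_def by (rule act_on_factor_carrier) simp

lemma dirac_term_eq_kron: "dirac_term Gs gam mu = kron (adj_factor Gs mu) (gam mu)"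
proof -
  have "(\<lambda>nu. if nu = mu then A_as (Gs ! nu) else 1\<^sub>m (nverts (Gs ! nu)))
      = (\<lambda>nu. if nu = mu then A_as (Gs ! mu) else 1\<^sub>m (nverts (Gs ! nu)))"
    by auto
  then show ?thesis
    by (simp add: dirac_term_def adj_factor_def act_on_factor_def kron_factors_def rev_map)
qed

definition adj_term :: "factor list \<Rightarrow> nat \<Rightarrow> nat \<Rightarrow> complex mat" where
  "adj_term Gs r mu = kron (adj_factor Gs mu) (1\<^sub>m r)"

lemma adj_term_carrier: "adj_term Gs r mu \<in> carrier_mat (nverts_prod Gs * r) (nverts_prod Gs * r)"
  unfolding adj_term_def by (intro kron_carrier_mat adj_factor_carrier one_carrier_mat)

lemma adj_term_skew_hermitian:
  assumes "valid_factor (Gs ! mu)" and "mu < length Gs"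
  shows "signed_hermitian (-1) (nverts_prod Gs * r) (adj_term Gs r mu)"
  using signed_hermitian_kron[OF signed_hermitian_act_on_factor[OF assms(2) A_as_skew_hermitian[OF assms(1)]]
                                 signed_hermitian_one_mat]
  by (simp add: adj_term_def adj_factor_def)

context
  fixes Gs :: "factor list" and gam :: "nat \<Rightarrow> complex mat" and r :: nat
  assumes gam_carrier: "\<forall>mu < length Gs. gam mu \<in> carrier_mat r r"
begin

lemma dirac_term_carrier:
  "mu < length Gs \<Longrightarrow> dirac_term Gs gam mu \<in> carrier_mat (nverts_prod Gs * r) (nverts_prod Gs * r)"
  unfolding dirac_term_eq_kron by (intro kron_carrier_mat adj_factor_carrier) (use gam_carrier in auto)

lemma dirac_carrier: "dirac Gs gam r \<in> carrier_mat (nverts_prod Gs * r) (nverts_prod Gs * r)"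
  unfolding dirac_def nverts_prod_def[symmetric]
  by (rule foldr_add_mat_carrier) (simp add: dirac_term_carrier)

lemma index_dirac:
  "i < nverts_prod Gs * r \<Longrightarrow> j < nverts_prod Gs * r \<Longrightarrow>
   dirac Gs gam r $$ (i, j) = (\<Sum>mu<length Gs. dirac_term Gs gam mu $$ (i, j))"
  unfolding dirac_def nverts_prod_def[symmetric]
  by (subst index_foldr_add_mat) (simp_all add: dirac_term_carrier sum_list_distinct_conv_sum_set atLeast0LessThan)

lemma dirac_term_mult:
  "mu < length Gs \<Longrightarrow> nu < length Gs \<Longrightarrow>
   dirac_term Gs gam mu * dirac_term Gs gam nu = kron (adj_factor Gs mu * adj_factor Gs nu) (gam mu * gam nu)"
  unfolding dirac_term_eq_kron using gam_carrier by (intro kron_mult[OF adj_factor_carrier _ adj_factor_carrier]) auto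

lemma dirac_term_eq_mult_adj_term:
  assumes mu: "mu < length Gs"
  shows "dirac_term Gs gam mu = kron (1\<^sub>m (nverts_prod Gs)) (gam mu) * adj_term Gs r mu"
proof -
  have gam_mu: "gam mu \<in> carrier_mat r r" using gam_carrier mu by simp
  then show ?thesis
    unfolding adj_term_def dirac_term_eq_kron kron_mult[OF one_carrier_mat gam_mu adj_factor_carrier one_carrier_mat]
    by (simp add: left_mult_one_mat[OF adj_factor_carrier])
qed

context
  assumes clifford: "\<forall>mu < length Gs. \<forall>nu < length Gs.
           gam mu * gam nu + gam nu * gam mu = (if mu = nu then 2 else 0) \<cdot>\<^sub>m 1\<^sub>m r"
begin

lemma dirac_terms_anticommute:
  assumes mu: "mu < length Gs" and nu: "nu < length Gs" and "mu \<noteq> nu"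
  shows "dirac_term Gs gam mu * dirac_term Gs gam nu + dirac_term Gs gam nu * dirac_term Gs gam mu
         = 0\<^sub>m (nverts_prod Gs * r) (nverts_prod Gs * r)"
proof -
  let ?X = "adj_factor Gs mu * adj_factor Gs nu"
  have "adj_factor Gs nu * adj_factor Gs mu = ?X"
    unfolding adj_factor_def using \<open>mu \<noteq> nu\<close> by (intro act_on_factor_commute) auto
  moreover have "gam mu * gam nu \<in> carrier_mat r r" "gam nu * gam mu \<in> carrier_mat r r"
    using gam_carrier mu nu by (metis mult_carrier_mat)+
  ultimately have "dirac_term Gs gam mu * dirac_term Gs gam nu + dirac_term Gs gam nu * dirac_term Gs gam mu
      = kron ?X (gam mu * gam nu + gam nu * gam mu)"
    using mu nu by (simp add: dirac_term_mult kron_add_right)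
  also have "\<dots> = 0 \<cdot>\<^sub>m kron ?X (1\<^sub>m r)"
    using clifford mu nu \<open>mu \<noteq> nu\<close> by (simp add: kron_smult_right)
  also have "\<dots> = 0\<^sub>m (nverts_prod Gs * r) (nverts_prod Gs * r)"
    using adj_factor_carrier[of Gs mu] adj_factor_carrier[of Gs nu]
    by (intro eq_matI) (simp_all add: carrier_matD)
  finally show ?thesis .
qed

lemma dirac_term_square: "mu < length Gs \<Longrightarrow>
  dirac_term Gs gam mu * dirac_term Gs gam mu = adj_term Gs r mu * adj_term Gs r mu"
proof -
  assume mu: "mu < length Gs"
  have "gam mu * gam mu = 1\<^sub>m r"
    using clifford gam_carrier mu by (intro square_eq_one_mat) auto
  then show ?thesis
    unfolding dirac_term_mult[OF mu mu] adj_term_def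
    using kron_mult[OF adj_factor_carrier one_carrier_mat adj_factor_carrier one_carrier_mat] by simp
qed

lemma index_dirac_square:
  assumes i: "i < nverts_prod Gs * r" and j: "j < nverts_prod Gs * r"
  shows "(dirac Gs gam r * dirac Gs gam r) $$ (i, j)
         = (\<Sum>mu<length Gs. (adj_term Gs r mu * adj_term Gs r mu) $$ (i, j))"
proof -
  let ?m = "nverts_prod Gs * r" and ?T = "dirac_term Gs gam" and ?D = "length Gs"
  have "(dirac Gs gam r * dirac Gs gam r) $$ (i, j)
      = (\<Sum>k<?m. (\<Sum>mu<?D. ?T mu $$ (i, k)) * (\<Sum>nu<?D. ?T nu $$ (k, j)))"
    using i j by (simp add: mat_mult_index[OF dirac_carrier dirac_carrier] index_dirac)
  also have "\<dots> = (\<Sum>mu<?D. \<Sum>k<?m. \<Sum>nu<?D. ?T mu $$ (i, k) * ?T nu $$ (k, j))"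
    unfolding sum_product by (rule sum.swap)
  also have "\<dots> = (\<Sum>mu<?D. \<Sum>nu<?D. \<Sum>k<?m. ?T mu $$ (i, k) * ?T nu $$ (k, j))"
    by (rule sum.cong[OF refl], rule sum.swap)
  also have "\<dots> = (\<Sum>mu<?D. \<Sum>nu<?D. (?T mu * ?T nu) $$ (i, j))"
    by (intro sum.cong refl) (simp add: mat_mult_index[OF dirac_term_carrier dirac_term_carrier i j])
  also have "\<dots> = (\<Sum>mu<?D. (?T mu * ?T mu) $$ (i, j))"
  proof (rule double_sum_eq_diagonal)
    fix mu nu assume "mu \<in> {..<?D}" "nu \<in> {..<?D}" "mu \<noteq> nu"
    then have "(?T mu * ?T nu + ?T nu * ?T mu) $$ (i, j) = 0"
      using i j by (simp add: dirac_terms_anticommute)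
    then show "(?T mu * ?T nu) $$ (i, j) + (?T nu * ?T mu) $$ (i, j) = 0"
      using i j \<open>mu \<in> {..<?D}\<close> \<open>nu \<in> {..<?D}\<close> dirac_term_carrier[of mu] dirac_term_carrier[of nu]
      by (simp add: carrier_matD)
  qed simp
  also have "\<dots> = (\<Sum>mu<?D. (adj_term Gs r mu * adj_term Gs r mu) $$ (i, j))"
    by (simp add: dirac_term_square)
  finally show ?thesis .
qed

theorem mat_kernel_dirac:
  assumes valid: "\<forall>G\<in>set Gs. valid_factor G"
  shows "mat_kernel (dirac Gs gam r) =
   {v \<in> carrier_vec (nverts_prod Gs * r). \<forall>mu < length Gs. adj_term Gs r mu *\<^sub>v v = 0\<^sub>v (nverts_prod Gs * r)}"
proof (rule Set.set_eqI, rule iffI)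
  let ?m = "nverts_prod Gs * r" and ?Dm = "dirac Gs gam r"
  fix v
  assume v: "v \<in> mat_kernel ?Dm"
  then have vc: "v \<in> carrier_vec ?m" and "?Dm *\<^sub>v v = 0\<^sub>v ?m"
    using mat_kernelD[OF dirac_carrier] by auto
  then have "(?Dm * ?Dm) *\<^sub>v v = 0\<^sub>v ?m"
    using dirac_carrier by (auto simp: assoc_mult_mat_vec)
  then have zero: "(\<Sum>mu\<in>{..<length Gs}. ((adj_term Gs r mu * adj_term Gs r mu) *\<^sub>v v) $ p) = 0"
    if "p < ?m" for p
    using mult_mat_vec_index_sum[OF finite_lessThan mult_carrier_mat[OF dirac_carrier dirac_carrier]
            mult_carrier_mat[OF adj_term_carrier adj_term_carrier] index_dirac_square vc that] that
    by simp
  have skew: "signed_hermitian (-1) ?m (adj_term Gs r mu)" if "mu \<in> {..<length Gs}" for mu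
    using that valid by (intro adj_term_skew_hermitian) auto
  have "adj_term Gs r mu *\<^sub>v v = 0\<^sub>v ?m" if "mu < length Gs" for mu
    using kernel_sum_skew_hermitian_squares[where S = "{..<length Gs}", OF _ skew vc zero] that by auto
  with vc show "v \<in> {v \<in> carrier_vec ?m. \<forall>mu < length Gs. adj_term Gs r mu *\<^sub>v v = 0\<^sub>v ?m}" by blast
next
  let ?m = "nverts_prod Gs * r" and ?Dm = "dirac Gs gam r"
  fix v assume "v \<in> {v \<in> carrier_vec ?m. \<forall>mu < length Gs. adj_term Gs r mu *\<^sub>v v = 0\<^sub>v ?m}"
  then have vc: "v \<in> carrier_vec ?m" and Y: "\<And>mu. mu < length Gs \<Longrightarrow> v \<in> mat_kernel (adj_term Gs r mu)"
    by (auto intro!: mat_kernelI[OF adj_term_carrier])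
  have "v \<in> mat_kernel (dirac_term Gs gam mu)" if mu: "mu < length Gs" for mu
  proof -
    have gam_mu: "gam mu \<in> carrier_mat r r" using gam_carrier mu by simp
    show ?thesis
      using dirac_term_eq_mult_adj_term[OF mu] Y[OF mu]
        mat_kernel_mult_subset[OF adj_term_carrier kron_carrier_mat[OF one_carrier_mat gam_mu]]
      by auto
  qed
  then have "dirac_term Gs gam mu *\<^sub>v v = 0\<^sub>v ?m" if "mu \<in> {..<length Gs}" for mu
    using that mat_kernelD(2)[OF dirac_term_carrier] by simp
  moreover have "dirac_term Gs gam mu \<in> carrier_mat ?m ?m" if "mu \<in> {..<length Gs}" for mu
    using that dirac_term_carrier by simp
  ultimately have "(?Dm *\<^sub>v v) $ p = 0" if "p < ?m" for p
    using mult_mat_vec_index_sum[OF finite_lessThan dirac_carrier _ index_dirac[OF that] vc that] that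
    by simp
  then show "v \<in> mat_kernel ?Dm"
    using dirac_carrier vc by (intro mat_kernelI[OF dirac_carrier vc] eq_vecI) (auto simp: carrier_matD)
qed

end

end

section \<open>Kernels of the factor matrices\<close>

lemma A_as_mult_vec_index:
  assumes valid: "valid_factor G" and y: "y \<in> carrier_vec (nverts G)" and i: "i < nverts G"
  shows "(A_as G *\<^sub>v y) $ i = (case G of
      Cycle n \<Rightarrow> y $ ((i + 1) mod n) - y $ ((i + n - 1) mod n)
    | Path n \<Rightarrow> (if i + 1 < n then y $ (i + 1) else 0) - (if 0 < i then y $ (i - 1) else 0))"
proof (cases G)
  case (Cycle n)
  have n: "n \<ge> 3" and iN: "i < n" using valid i Cycle by auto
  have succ: "(i + 1) mod n = (if i + 1 < n then i + 1 else 0)"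
    and pred: "(i + n - 1) mod n = (if i = 0 then n - 1 else i - 1)"
    using iN by (rule mod_Suc_less, rule mod_add_pred_less)
  have out: "edge G i j \<longleftrightarrow> j = (i + 1) mod n" if "j < n" for j
    using Cycle iN that n succ by auto
  have into: "edge G j i \<longleftrightarrow> j = (i + n - 1) mod n" if "j < n" for j
    using Cycle iN that n pred by auto
  have "(i + 1) mod n \<noteq> (i + n - 1) mod n"
    using n iN succ pred by auto
  then have "A_as G $$ (i, j) * y $ j = (if j = (i + 1) mod n then y $ j else 0) - (if j = (i + n - 1) mod n then y $ j else 0)"
    if "j < n" for j
    using out[OF that] into[OF that] that iN Cycle by (auto simp: A_as_def)
  then have "(A_as G *\<^sub>v y) $ i = (\<Sum>j<n. (if j = (i + 1) mod n then y $ j else 0) - (if j = (i + n - 1) mod n then y $ j else 0))"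
    using mult_mat_vec_index[OF A_as_carrier y i] Cycle by simp
  also have "\<dots> = y $ ((i + 1) mod n) - y $ ((i + n - 1) mod n)"
    using n by (simp only: sum_subtractf sum_lessThan_delta) simp
  finally show ?thesis using Cycle by simp
next
  case (Path n)
  have iN: "i < n" using i Path by simp
  have "A_as G $$ (i, j) * y $ j = (if j = i + 1 then y $ j else 0) - (if j = i - 1 then (if 0 < i then y $ j else 0) else 0)"
    if "j < n" for j
    using that iN Path by (auto simp: A_as_def)
  then have "(A_as G *\<^sub>v y) $ i = (\<Sum>j<n. (if j = i + 1 then y $ j else 0) - (if j = i - 1 then (if 0 < i then y $ j else 0) else 0))"
    using mult_mat_vec_index[OF A_as_carrier y i] Path by simp
  also have "\<dots> = (if i + 1 < n then y $ (i + 1) else 0) - (if 0 < i then y $ (i - 1) else 0)"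
    using iN by (simp only: sum_subtractf sum_lessThan_delta) auto
  finally show ?thesis using Path by simp
qed

lemma eq_mod_2_of_step_2:
  fixes f :: "nat \<Rightarrow> 'a" and i :: nat
  assumes "\<And>i. 2 \<le> i \<Longrightarrow> i < n \<Longrightarrow> f i = f (i - 2)" and "i < n"
  shows "f i = f (i mod 2)"
  using assms(2)
proof (induction i rule: less_induct)
  case (less i)
  show ?case
  proof (cases "i < 2")
    case False
    then have "f i = f (i - 2)" using assms(1) less.prems by simp
    also have "\<dots> = f ((i - 2) mod 2)" by (rule less.IH) (use False less.prems in auto)
    finally show ?thesis using False by (simp add: mod_if)
  qed simp
qed

lemma cycle_recurrence_iff:
  fixes y :: "'a vec"
  assumes n: "n \<ge> 3"
  shows "(\<forall>i<n. y $ ((i + 1) mod n) = y $ ((i + n - 1) mod n)) \<longleftrightarrow>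
         (\<forall>i<n. y $ i = (if even n then y $ (i mod 2) else y $ 0))"
proof
  assume rec: "\<forall>i<n. y $ ((i + 1) mod n) = y $ ((i + n - 1) mod n)"
  have "y $ i = y $ (i - 2)" if "2 \<le> i" "i < n" for i
    using rec[rule_format, of "i - 1"] mod_add_pred_less[of "i - 1" n] that by (simp add: numeral_2_eq_2)
  then have par: "y $ i = y $ (i mod 2)" if "i < n" for i
    using eq_mod_2_of_step_2[of n "\<lambda>i. y $ i"] that by blast
  have y1: "y $ 1 = y $ 0" if "odd n"
  proof -
    have "y $ 1 = y $ (n - 1)" using rec[rule_format, of 0] n by simp
    also have "\<dots> = y $ 0" using par[of "n - 1"] that n by (simp add: mod2_eq_if)
    finally show ?thesis .
  qed
  show "\<forall>i<n. y $ i = (if even n then y $ (i mod 2) else y $ 0)"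
  proof (intro allI impI)
    fix i assume "i < n"
    then show "y $ i = (if even n then y $ (i mod 2) else y $ 0)"
      using par[of i] y1 by (cases "even i") (auto simp: mod2_eq_if)
  qed
next
  assume sol: "\<forall>i<n. y $ i = (if even n then y $ (i mod 2) else y $ 0)"
  have sol': "y $ j = (if even n \<and> odd j then y $ 1 else y $ 0)" if "j < n" for j
    using sol[rule_format, OF that] by (cases "even j") (auto simp: mod2_eq_if)
  show "\<forall>i<n. y $ ((i + 1) mod n) = y $ ((i + n - 1) mod n)"
  proof (intro allI impI)
    fix i assume i: "i < n"
    have "(i + 1) mod n < n" "(i + n - 1) mod n < n" using n by auto
    moreover have "odd ((i + 1) mod n) \<longleftrightarrow> odd ((i + n - 1) mod n)" if "even n"
    proof -
      have "(i + n - 1) mod 2 = (i + 1) mod 2" using that n by (auto simp: mod2_eq_if)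
      then show ?thesis using that by (simp add: odd_iff_mod_2_eq_one mod_mod_cancel)
    qed
    ultimately show "y $ ((i + 1) mod n) = y $ ((i + n - 1) mod n)"
      using sol'[of "(i + 1) mod n"] sol'[of "(i + n - 1) mod n"] by (cases "even n") auto
  qed
qed

lemma path_recurrence_iff:
  fixes y :: "'a::zero vec"
  assumes n: "n \<ge> 2"
  shows "(\<forall>i<n. (if i + 1 < n then y $ (i + 1) else 0) = (if 0 < i then y $ (i - 1) else 0)) \<longleftrightarrow>
         (\<forall>i<n. y $ i = (if odd n \<and> even i then y $ 0 else 0))"
proof
  assume rec: "\<forall>i<n. (if i + 1 < n then y $ (i + 1) else 0) = (if 0 < i then y $ (i - 1) else 0)"
  have "y $ i = y $ (i - 2)" if "2 \<le> i" "i < n" for i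
    using rec[rule_format, of "i - 1"] that by (simp add: numeral_2_eq_2)
  then have par: "y $ i = y $ (i mod 2)" if "i < n" for i
    using eq_mod_2_of_step_2[of n "\<lambda>i. y $ i"] that by blast
  have y1: "y $ 1 = 0" using rec[rule_format, of 0] n by simp
  have y0: "y $ 0 = 0" if "even n"
  proof -
    have "y $ (n - 2) = 0" using rec[rule_format, of "n - 1"] n by (simp add: numeral_2_eq_2)
    then show ?thesis using par[of "n - 2"] that n by (simp add: mod2_eq_if)
  qed
  show "\<forall>i<n. y $ i = (if odd n \<and> even i then y $ 0 else 0)"
  proof (intro allI impI)
    fix i assume "i < n"
    then show "y $ i = (if odd n \<and> even i then y $ 0 else 0)"
      using par[of i] y0 y1 by (cases "even i") (auto simp: mod2_eq_if)
  qed
next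
  assume sol: "\<forall>i<n. y $ i = (if odd n \<and> even i then y $ 0 else 0)"
  obtain z where sol': "\<And>j. j < n \<Longrightarrow> y $ j = (if odd n \<and> even j then z else 0)"
    using sol by blast
  show "\<forall>i<n. (if i + 1 < n then y $ (i + 1) else 0) = (if 0 < i then y $ (i - 1) else 0)"
  proof (intro allI impI)
    fix i assume i: "i < n"
    consider "i = 0" | "0 < i" "i + 1 < n" | "0 < i" "i + 1 = n" using i by linarith
    then show "(if i + 1 < n then y $ (i + 1) else 0) = (if 0 < i then y $ (i - 1) else 0)"
      using sol'[of "i + 1"] sol'[of "i - 1"] i n by cases auto
  qed
qed

definition kernel_coords :: "factor \<Rightarrow> nat set" where
  "kernel_coords G = (case G of
      Cycle n \<Rightarrow> if even n then {0, 1} else {0}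
    | Path n \<Rightarrow> if even n then {} else {0})"

(* For k in kernel_coords G, the vectors kernel_basis G k form a basis of the kernel of A_as G
   that restricts to the unit vectors on kernel_coords G. *)
definition kernel_basis :: "factor \<Rightarrow> nat \<Rightarrow> nat \<Rightarrow> complex" where
  "kernel_basis G k i = (case G of
      Cycle n \<Rightarrow> if even n then (if i mod 2 = k then 1 else 0) else 1
    | Path n \<Rightarrow> if i mod 2 = k then 1 else 0)"

lemma kernel_coords_subset: "valid_factor G \<Longrightarrow> kernel_coords G \<subseteq> {..<nverts G}"
  by (cases G) (auto simp: kernel_coords_def)

lemma finite_kernel_coords [simp]: "finite (kernel_coords G)"
  by (cases G) (auto simp: kernel_coords_def)

lemma card_kernel_coords:
  "card (kernel_coords G) = (case G of Cycle n \<Rightarrow> if even n then 2 else 1 | Path n \<Rightarrow> if even n then 0 else 1)"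
  by (cases G) (auto simp: kernel_coords_def)

lemma kernel_basis_coord:
  "j \<in> kernel_coords G \<Longrightarrow> k \<in> kernel_coords G \<Longrightarrow> kernel_basis G j k = (if k = j then 1 else 0)"
  by (cases G) (auto simp: kernel_coords_def kernel_basis_def split: if_splits)

lemma A_as_kernel_iff:
  assumes G: "valid_factor G" and y: "y \<in> carrier_vec (nverts G)"
  shows "A_as G *\<^sub>v y = 0\<^sub>v (nverts G) \<longleftrightarrow>
         (\<forall>i < nverts G. y $ i = (\<Sum>k\<in>kernel_coords G. y $ k * kernel_basis G k i))"
proof -
  have "A_as G *\<^sub>v y = 0\<^sub>v (nverts G) \<longleftrightarrow> (\<forall>i < nverts G. (A_as G *\<^sub>v y) $ i = 0)"
    by (simp add: vec_eq_iff[of _ "0\<^sub>v _"] A_as_def del: index_mult_mat_vec)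
  also have "\<dots> \<longleftrightarrow> (\<forall>i < nverts G. y $ i = (\<Sum>k\<in>kernel_coords G. y $ k * kernel_basis G k i))"
  proof (cases G)
    case (Cycle n)
    have "(\<Sum>k\<in>kernel_coords G. y $ k * kernel_basis G k i) = (if even n then y $ (i mod 2) else y $ 0)" for i
      using Cycle by (cases "even i") (auto simp: kernel_coords_def kernel_basis_def mod2_eq_if)
    then show ?thesis
      using A_as_mult_vec_index[OF G y] cycle_recurrence_iff[of n y] G Cycle by simp
  next
    case (Path n)
    have "(\<Sum>k\<in>kernel_coords G. y $ k * kernel_basis G k i) = (if odd n \<and> even i then y $ 0 else 0)" for i
      using Path by (auto simp: kernel_coords_def kernel_basis_def mod2_eq_if)
    then show ?thesis
      using A_as_mult_vec_index[OF G y] path_recurrence_iff[of n y] G Path by simp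
  qed
  finally show ?thesis .
qed

(* kernel_shear 1 G is the identity with the columns indexed by kernel_coords G replaced by the
   kernel basis; it maps the coordinate subspace of kernel_coords G onto the kernel of A_as G. *)
definition kernel_shear :: "complex \<Rightarrow> factor \<Rightarrow> complex mat" where
  "kernel_shear c G = mat (nverts G) (nverts G) (\<lambda>(i, j). (if i = j then 1 else 0)
     + c * (if j \<in> kernel_coords G \<and> i \<noteq> j then kernel_basis G j i else 0))"

lemma kernel_shear_carrier [simp]: "kernel_shear c G \<in> carrier_mat (nverts G) (nverts G)"
  by (simp add: kernel_shear_def)

lemma kernel_shear_inverse: "kernel_shear c G * kernel_shear (- c) G = 1\<^sub>m (nverts G)"
proof -
  let ?f = "\<lambda>i j. if j \<in> kernel_coords G \<and> i \<noteq> j then kernel_basis G j i else 0"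
  have "?f i k * ?f k j = 0" for i k j
    by (cases "k \<in> kernel_coords G") (auto simp: kernel_basis_coord)
  then show ?thesis
    using unipotent_mat_mult_inverse[of ?f "nverts G" c] by (simp add: kernel_shear_def)
qed

lemma kernel_shear_mult_vec_index:
  assumes G: "valid_factor G" and x: "x \<in> carrier_vec (nverts G)" and i: "i < nverts G"
  shows "(kernel_shear 1 G *\<^sub>v x) $ i = x $ i + (\<Sum>j\<in>kernel_coords G - {i}. kernel_basis G j i * x $ j)"
proof -
  let ?n = "nverts G" and ?K = "kernel_coords G"
  have "(kernel_shear 1 G *\<^sub>v x) $ i
      = (\<Sum>j<?n. (if j = i then x $ j else 0) + (if j \<in> ?K - {i} then kernel_basis G j i * x $ j else 0))"
    by (subst mult_mat_vec_index[OF kernel_shear_carrier x i])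
       (intro sum.cong refl, use i in \<open>auto simp: kernel_shear_def algebra_simps\<close>)
  also have "\<dots> = x $ i + (\<Sum>j\<in>{..<?n} \<inter> (?K - {i}). kernel_basis G j i * x $ j)"
    using i by (simp only: sum.distrib sum_lessThan_delta sum.inter_restrict[OF finite_lessThan] if_True)
  also have "{..<?n} \<inter> (?K - {i}) = ?K - {i}"
    using kernel_coords_subset[OF G] by blast
  finally show ?thesis .
qed

lemma mat_kernel_A_as_mult_kernel_shear:
  assumes G: "valid_factor G"
  shows "mat_kernel (A_as G * kernel_shear 1 G)
         = {x \<in> carrier_vec (nverts G). \<forall>i < nverts G. i \<notin> kernel_coords G \<longrightarrow> x $ i = 0}"
proof (rule Set.set_eqI)
  fix x
  let ?n = "nverts G" and ?K = "kernel_coords G" and ?S = "kernel_shear 1 G"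
  have AS: "A_as G * ?S \<in> carrier_mat ?n ?n" by (rule mult_carrier_mat[OF A_as_carrier kernel_shear_carrier])
  show "x \<in> mat_kernel (A_as G * ?S) \<longleftrightarrow> x \<in> {x \<in> carrier_vec ?n. \<forall>i < ?n. i \<notin> ?K \<longrightarrow> x $ i = 0}"
  proof (cases "x \<in> carrier_vec ?n")
    case x: True
    have Sx: "?S *\<^sub>v x \<in> carrier_vec ?n" by (rule mult_mat_vec_carrier[OF kernel_shear_carrier x])
    have Sx_K: "(?S *\<^sub>v x) $ k = x $ k" if k: "k \<in> ?K" for k
    proof -
      have "(\<Sum>j\<in>?K - {k}. kernel_basis G j k * x $ j) = 0"
        by (rule sum.neutral) (use kernel_basis_coord k in auto)
      then show ?thesis
        using kernel_shear_mult_vec_index[OF G x] k kernel_coords_subset[OF G] by auto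
    qed
    have "x \<in> mat_kernel (A_as G * ?S) \<longleftrightarrow> A_as G *\<^sub>v (?S *\<^sub>v x) = 0\<^sub>v ?n"
      using x AS by (simp add: mat_kernel_def assoc_mult_mat_vec[of _ ?n ?n _ ?n] kernel_shear_def A_as_def)
    also have "\<dots> \<longleftrightarrow> (\<forall>i < ?n. (?S *\<^sub>v x) $ i = (\<Sum>k\<in>?K. x $ k * kernel_basis G k i))"
      using A_as_kernel_iff[OF G Sx] by (simp add: Sx_K)
    also have "\<dots> \<longleftrightarrow> (\<forall>i < ?n. i \<notin> ?K \<longrightarrow> x $ i = 0)"
    proof (intro all_cong1 imp_cong refl)
      fix i assume i: "i < ?n"
      show "(?S *\<^sub>v x) $ i = (\<Sum>k\<in>?K. x $ k * kernel_basis G k i) \<longleftrightarrow> (i \<notin> ?K \<longrightarrow> x $ i = 0)"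
      proof (cases "i \<in> ?K")
        case True
        then have "(\<Sum>k\<in>?K. x $ k * kernel_basis G k i) = x $ i"
          by (simp add: kernel_basis_coord sum.delta if_distrib[of "\<lambda>c. x $ _ * c"] cong: if_cong)
        then show ?thesis using Sx_K[OF True] True by simp
      next
        case False
        then show ?thesis
          using kernel_shear_mult_vec_index[OF G x i] by (simp add: mult.commute)
      qed
    qed
    finally show ?thesis using x by simp
  qed (use mat_kernel_carrier[OF AS] in auto)
qed

lemma prod_card_kernel_coords:
  "(\<Prod>mu < length Gs. card (kernel_coords (Gs ! mu))) = (if has_even_path Gs then 0 else 2 ^ c_even Gs)"
proof (cases "has_even_path Gs")
  case True
  then obtain n where "Path n \<in> set Gs" "even n" unfolding has_even_path_def by auto
  then obtain mu where "mu < length Gs" "Gs ! mu = Path n" by (metis in_set_conv_nth)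
  then show ?thesis using True \<open>even n\<close> by (auto simp: card_kernel_coords intro!: bexI[of _ mu])
next
  case False
  let ?P = "\<lambda>G. \<exists>n. G = Cycle n \<and> even n"
  have "card (kernel_coords (Gs ! mu)) = (if ?P (Gs ! mu) then 2 else 1)" if "mu < length Gs" for mu
  proof (cases "Gs ! mu")
    case (Path n)
    then have "Path n \<in> set Gs" using that by (metis nth_mem)
    then show ?thesis using False Path by (auto simp: has_even_path_def card_kernel_coords)
  qed (simp add: card_kernel_coords)
  then have "(\<Prod>mu < length Gs. card (kernel_coords (Gs ! mu))) = (\<Prod>mu < length Gs. if ?P (Gs ! mu) then 2 else 1)"
    by (intro prod.cong) auto
  also have "\<dots> = 2 ^ card {mu \<in> {..<length Gs}. ?P (Gs ! mu)}"
    by (simp add: prod.If_cases Int_def)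
  also have "card {mu \<in> {..<length Gs}. ?P (Gs ! mu)} = c_even Gs"
    unfolding c_even_def by (simp add: length_filter_conv_card lessThan_def)
  finally show ?thesis using False by simp
qed

section \<open>Counting the kernel\<close>

definition shear_except :: "factor list \<Rightarrow> complex \<Rightarrow> nat \<Rightarrow> complex mat" where
  "shear_except Gs c mu = kron_factors Gs (\<lambda>nu. if nu = mu then 1\<^sub>m (nverts (Gs ! nu)) else kernel_shear c (Gs ! nu))"

definition dirac_shear :: "factor list \<Rightarrow> complex \<Rightarrow> nat \<Rightarrow> complex mat" where
  "dirac_shear Gs c r = kron (kron_factors Gs (\<lambda>nu. kernel_shear c (Gs ! nu))) (1\<^sub>m r)"

lemma shear_except_carrier: "shear_except Gs c mu \<in> carrier_mat (nverts_prod Gs) (nverts_prod Gs)"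
  unfolding shear_except_def by (rule kron_factors_carrier) simp

lemma dirac_shear_carrier: "dirac_shear Gs c r \<in> carrier_mat (nverts_prod Gs * r) (nverts_prod Gs * r)"
  unfolding dirac_shear_def by (intro kron_carrier_mat kron_factors_carrier one_carrier_mat kernel_shear_carrier)

lemma dirac_shear_inverse: "dirac_shear Gs c r * dirac_shear Gs (- c) r = 1\<^sub>m (nverts_prod Gs * r)"
  unfolding dirac_shear_def
  by (simp add: kron_mult[OF kron_factors_carrier one_carrier_mat kron_factors_carrier one_carrier_mat]
                kron_factors_inverse kernel_shear_inverse kron_one_mat)

lemma shear_except_inverse: "shear_except Gs c mu * shear_except Gs (- c) mu = 1\<^sub>m (nverts_prod Gs)"
  unfolding shear_except_def by (rule kron_factors_inverse) (simp_all add: kernel_shear_inverse)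

lemma adj_factor_mult_shear:
  "adj_factor Gs mu * kron_factors Gs (\<lambda>nu. kernel_shear 1 (Gs ! nu))
   = shear_except Gs 1 mu * act_on_factor Gs mu (A_as (Gs ! mu) * kernel_shear 1 (Gs ! mu))"
proof -
  have "adj_factor Gs mu * kron_factors Gs (\<lambda>nu. kernel_shear 1 (Gs ! nu))
      = kron_factors Gs (\<lambda>nu. if nu = mu then A_as (Gs ! mu) * kernel_shear 1 (Gs ! mu) else kernel_shear 1 (Gs ! nu))"
    unfolding adj_factor_def act_on_factor_def
    by (subst kron_factors_mult) (auto intro!: arg_cong[where f = "kron_factors Gs"]
                                     simp: left_mult_one_mat[OF kernel_shear_carrier])
  also have "\<dots> = shear_except Gs 1 mu * act_on_factor Gs mu (A_as (Gs ! mu) * kernel_shear 1 (Gs ! mu))"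
    unfolding shear_except_def act_on_factor_def
    by (subst kron_factors_mult)
       (auto intro!: arg_cong[where f = "kron_factors Gs"] mult_carrier_mat[OF A_as_carrier kernel_shear_carrier]
             simp: right_mult_one_mat[OF kernel_shear_carrier]
                   left_mult_one_mat[OF mult_carrier_mat[OF A_as_carrier kernel_shear_carrier]])
  finally show ?thesis .
qed

definition vertex_coord :: "factor list \<Rightarrow> nat \<Rightarrow> nat \<Rightarrow> nat \<Rightarrow> nat" where
  "vertex_coord Gs r mu p = p div ((\<Prod>nu<mu. nverts (Gs ! nu)) * r) mod nverts (Gs ! mu)"

lemma mat_kernel_adj_term_mult_shear:
  assumes G: "valid_factor (Gs ! mu)" and mu: "mu < length Gs"
  shows "mat_kernel (adj_term Gs r mu * dirac_shear Gs 1 r)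
    = {w \<in> carrier_vec (nverts_prod Gs * r). \<forall>p < nverts_prod Gs * r.
         vertex_coord Gs r mu p \<notin> kernel_coords (Gs ! mu) \<longrightarrow> w $ p = 0}"
proof -
  let ?a = "\<Prod>nu = Suc mu..<length Gs. nverts (Gs ! nu)" and ?n = "nverts (Gs ! mu)"
    and ?b = "(\<Prod>nu<mu. nverts (Gs ! nu)) * r"
  let ?C = "A_as (Gs ! mu) * kernel_shear 1 (Gs ! mu)"
  let ?Q = "\<lambda>c. kron (shear_except Gs c mu) (1\<^sub>m r)"
  have C: "?C \<in> carrier_mat ?n ?n" by (rule mult_carrier_mat[OF A_as_carrier kernel_shear_carrier])
  have Q: "?Q c \<in> carrier_mat (nverts_prod Gs * r) (nverts_prod Gs * r)" for c
    by (intro kron_carrier_mat shear_except_carrier one_carrier_mat)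
  have Z: "kron (act_on_factor Gs mu ?C) (1\<^sub>m r) \<in> carrier_mat (nverts_prod Gs * r) (nverts_prod Gs * r)"
    by (intro kron_carrier_mat act_on_factor_carrier[OF C] one_carrier_mat)
  have "adj_term Gs r mu * dirac_shear Gs 1 r = ?Q 1 * kron (act_on_factor Gs mu ?C) (1\<^sub>m r)"
    unfolding adj_term_def dirac_shear_def
    by (simp add: kron_mult[OF adj_factor_carrier one_carrier_mat kron_factors_carrier one_carrier_mat]
        adj_factor_mult_shear kron_mult[OF shear_except_carrier one_carrier_mat act_on_factor_carrier[OF C] one_carrier_mat])
  moreover have "?Q (-1) * ?Q 1 = 1\<^sub>m (nverts_prod Gs * r)"
    using shear_except_inverse[of Gs "-1" mu]
    by (simp add: kron_mult[OF shear_except_carrier one_carrier_mat shear_except_carrier one_carrier_mat] kron_one_mat)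
  ultimately have "mat_kernel (adj_term Gs r mu * dirac_shear Gs 1 r) = mat_kernel (kron (act_on_factor Gs mu ?C) (1\<^sub>m r))"
    using mat_kernel_mult_eq[OF Z Q Q] by simp
  also have "kron (act_on_factor Gs mu ?C) (1\<^sub>m r) = kron (1\<^sub>m ?a) (kron ?C (1\<^sub>m ?b))"
    unfolding act_on_factor_eq_kron[OF mu C]
      kron_assoc[OF one_carrier_mat kron_carrier_mat[OF C one_carrier_mat] one_carrier_mat]
      kron_assoc[OF C one_carrier_mat one_carrier_mat] kron_one_mat ..
  also have "mat_kernel \<dots> = {w \<in> carrier_vec (?a * (?n * ?b)).
      \<forall>p < ?a * (?n * ?b). p div ?b mod ?n \<notin> kernel_coords (Gs ! mu) \<longrightarrow> w $ p = 0}"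
    using kron_one_kron_one_mult_vec_eq_0_iff_coords[OF C mat_kernel_A_as_mult_kernel_shear[OF G]]
    by (auto simp: mat_kernel[OF kron_carrier_mat[OF one_carrier_mat kron_carrier_mat[OF C one_carrier_mat]]])
  also have "?a * (?n * ?b) = nverts_prod Gs * r"
    using nverts_prod_split[OF mu] by (simp add: mult_ac)
  finally show ?thesis by (simp only: vertex_coord_def)
qed

lemma mat_kernel_dirac_mult_shear:
  assumes valid: "\<forall>G\<in>set Gs. valid_factor G"
    and gam_carrier: "\<forall>mu < length Gs. gam mu \<in> carrier_mat r r"
    and clifford: "\<forall>mu < length Gs. \<forall>nu < length Gs.
           gam mu * gam nu + gam nu * gam mu = (if mu = nu then 2 else 0) \<cdot>\<^sub>m 1\<^sub>m r"
  shows "mat_kernel (dirac Gs gam r * dirac_shear Gs 1 r)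
    = {w \<in> carrier_vec (nverts_prod Gs * r). \<forall>p < nverts_prod Gs * r.
         (\<exists>mu < length Gs. vertex_coord Gs r mu p \<notin> kernel_coords (Gs ! mu)) \<longrightarrow> w $ p = 0}"
proof (rule Set.set_eqI)
  fix w
  let ?m = "nverts_prod Gs * r" and ?S = "dirac_shear Gs 1 r"
  have D: "dirac Gs gam r \<in> carrier_mat ?m ?m" by (rule dirac_carrier[OF gam_carrier])
  show "w \<in> mat_kernel (dirac Gs gam r * ?S) \<longleftrightarrow> w \<in> {w \<in> carrier_vec ?m. \<forall>p < ?m.
      (\<exists>mu < length Gs. vertex_coord Gs r mu p \<notin> kernel_coords (Gs ! mu)) \<longrightarrow> w $ p = 0}"
  proof (cases "w \<in> carrier_vec ?m")
    case w: True
    have Sw: "?S *\<^sub>v w \<in> carrier_vec ?m" by (rule mult_mat_vec_carrier[OF dirac_shear_carrier w])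
    have "w \<in> mat_kernel (dirac Gs gam r * ?S) \<longleftrightarrow> (\<forall>mu < length Gs. adj_term Gs r mu *\<^sub>v (?S *\<^sub>v w) = 0\<^sub>v ?m)"
      using mat_kernel_mult_iff[OF D dirac_shear_carrier w] Sw
      by (simp add: mat_kernel_dirac[OF gam_carrier clifford valid])
    also have "\<dots> \<longleftrightarrow> (\<forall>mu < length Gs. w \<in> mat_kernel (adj_term Gs r mu * ?S))"
      using mat_kernel_mult_iff[OF adj_term_carrier dirac_shear_carrier w] Sw
      by (simp add: mat_kernel[OF adj_term_carrier])
    also have "\<dots> \<longleftrightarrow> (\<forall>mu < length Gs. \<forall>p < ?m. vertex_coord Gs r mu p \<notin> kernel_coords (Gs ! mu) \<longrightarrow> w $ p = 0)"
      using mat_kernel_adj_term_mult_shear valid w by auto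
    finally show ?thesis using w by blast
  qed (use mat_kernel_carrier[OF mult_carrier_mat[OF D dirac_shear_carrier]] in auto)
qed

lemma kernel_dim_dirac:
  assumes valid: "\<forall>G\<in>set Gs. valid_factor G"
    and gam_carrier: "\<forall>mu < length Gs. gam mu \<in> carrier_mat r r"
    and clifford: "\<forall>mu < length Gs. \<forall>nu < length Gs.
           gam mu * gam nu + gam nu * gam mu = (if mu = nu then 2 else 0) \<cdot>\<^sub>m 1\<^sub>m r"
  shows "kernel_dim (dirac Gs gam r) = r * (\<Prod>mu < length Gs. card (kernel_coords (Gs ! mu)))"
proof -
  let ?m = "nverts_prod Gs * r" and ?n = "\<lambda>nu. nverts (Gs ! nu)"
  let ?J = "{p. \<forall>mu < length Gs. vertex_coord Gs r mu p \<in> kernel_coords (Gs ! mu)}"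
  have D: "dirac Gs gam r \<in> carrier_mat ?m ?m" by (rule dirac_carrier[OF gam_carrier])
  have "kernel_dim (dirac Gs gam r) = kernel.dim ?m (dirac Gs gam r * dirac_shear Gs 1 r)"
    using mat_kernel_dim_mult_eq_right[OF D dirac_shear_carrier dirac_shear_carrier dirac_shear_inverse]
    by (simp add: kernel_dim_def carrier_matD[OF D])
  also have "\<dots> = card (?J \<inter> {..<?m})"
    by (rule kernel_dim_coordinate_subspace)
       (simp add: mat_kernel_dirac_mult_shear[OF valid gam_carrier clifford])
  also have "?J \<inter> {..<?m} = {p. p < prod ?n {..<length Gs} * r \<and>
      (\<forall>mu < length Gs. p div (prod ?n {..<mu} * r) mod ?n mu \<in> (if mu < length Gs then kernel_coords (Gs ! mu) else {}))}"
    by (auto simp: nverts_prod_eq vertex_coord_def)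
  also have "card \<dots> = r * (\<Prod>mu < length Gs. card (if mu < length Gs then kernel_coords (Gs ! mu) else {}))"
    by (rule card_mixed_radix_digits) (use kernel_coords_subset valid in auto)
  finally show ?thesis by simp
qed

theorem mainTheorem7:
  fixes Gs :: "factor list" and gam :: "nat \<Rightarrow> complex mat" and r :: nat
  assumes "Gs \<noteq> []"
    and "\<forall>G\<in>set Gs. valid_factor G"
    and "r > 0"
    and "\<forall>mu < length Gs. gam mu \<in> carrier_mat r r"
    and "\<forall>mu < length Gs. \<forall>nu < length Gs.
           gam mu * gam nu + gam nu * gam mu = (if mu = nu then 2 else 0) \<cdot>\<^sub>m 1\<^sub>m r"
  shows "real (kernel_dim (dirac Gs gam r)) / real r =
           (if has_even_path Gs then 0 else 2 ^ c_even Gs)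
       \<and> (\<not> has_even_path Gs \<longrightarrow> kernel_dim (dirac Gs gam r) \<ge> r)"
proof -
  have "kernel_dim (dirac Gs gam r) = r * (if has_even_path Gs then 0 else 2 ^ c_even Gs)"
    using kernel_dim_dirac[OF assms(2,4,5)] prod_card_kernel_coords[of Gs] by simp
  then show ?thesis using \<open>r > 0\<close> by auto
qed

end
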